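(* For all Boolean functions $f:\{0,1\}^n\times\{0,1\}^n\to\{0,1\}$: $PC(f)=\Theta(QC(f))$.
   Context: A (classical, resp. quantum) weakly unbounded error protocol for $f$ is a two-party protocol (Alice holds $x$, Bob holds $y$) whose output is correct with probability exceeding $1/2$ on every input; if its worst-case error is $1/2-\delta$ and worst-case communication is $c$ (bits, resp. qubits), its cost is $c-\lfloor\log\delta\rfloor$ ($\log$ base 2). Classical protocols use private random bits. Quantum protocols are in Yao's model without prior entanglement: each player holds private qubits initialized to the input and $|0\rangle$; in each round one player applies a unitary to his qubits and sends one qubit; at the end a qubit is measured giving the output. $PC(f)$ (resp. $QC(f)$) is the minimum cost of a classical (resp. quantum) weakly unbounded error protocol for $f$. *)

theory Defs
  imports "HOL-Probability.Probability"
begin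

definition inputs :: "nat \<Rightarrow> bool list set" where
  "inputs n = {x. length x = n}"

text \<open>Protocol tree: at an ANode Alice sends a bit, at a BNode Bob sends a bit
  (False = go left, True = go right); leaves carry the output, so the output is a
  function of the transcript.\<close>
datatype ctree = CLeaf bool | ANode ctree ctree | BNode ctree ctree

fun cdepth :: "ctree \<Rightarrow> nat" where
  "cdepth (CLeaf b) = 0"
| "cdepth (ANode l r) = Suc (max (cdepth l) (cdepth r))"
| "cdepth (BNode l r) = Suc (max (cdepth l) (cdepth r))"

fun crun :: "ctree \<Rightarrow> (bool list \<Rightarrow> bool) \<Rightarrow> (bool list \<Rightarrow> bool) \<Rightarrow> bool list \<Rightarrow> bool" where
  "crun (CLeaf b) a b' tr = b"
| "crun (ANode l r) a b' tr =
     (if a tr then crun r a b' (tr @ [True]) else crun l a b' (tr @ [False]))"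
| "crun (BNode l r) a b' tr =
     (if b' tr then crun r a b' (tr @ [True]) else crun l a b' (tr @ [False]))"

text \<open>Private randomness of each player: an independent random variable with an
  arbitrary distribution on nat (equivalent, for bounded communication, to an
  unbounded supply of private fair coins). The message of a player is a function
  of his input, his private randomness and the transcript so far.\<close>
record cprot =
  ctr :: ctree
  crandA :: "nat pmf"
  crandB :: "nat pmf"
  cmsgA :: "bool list \<Rightarrow> nat \<Rightarrow> bool list \<Rightarrow> bool"
  cmsgB :: "bool list \<Rightarrow> nat \<Rightarrow> bool list \<Rightarrow> bool"

definition cerr :: "cprot \<Rightarrow> (bool list \<Rightarrow> bool list \<Rightarrow> bool) \<Rightarrow> bool list \<Rightarrow> bool list \<Rightarrow> real" where
  "cerr P f x y = measure_pmf.prob (pair_pmf (crandA P) (crandB P))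
      {(ra, rb). crun (ctr P) (cmsgA P x ra) (cmsgB P y rb) [] \<noteq> f x y}"

definition cdelta :: "cprot \<Rightarrow> nat \<Rightarrow> (bool list \<Rightarrow> bool list \<Rightarrow> bool) \<Rightarrow> real" where
  "cdelta P n f = 1/2 - Max ((\<lambda>(x, y). cerr P f x y) ` (inputs n \<times> inputs n))"

definition c_wue :: "cprot \<Rightarrow> nat \<Rightarrow> (bool list \<Rightarrow> bool list \<Rightarrow> bool) \<Rightarrow> bool" where
  "c_wue P n f \<longleftrightarrow> cdelta P n f > 0"

definition ccost :: "cprot \<Rightarrow> nat \<Rightarrow> (bool list \<Rightarrow> bool list \<Rightarrow> bool) \<Rightarrow> real" where
  "ccost P n f = real (cdepth (ctr P)) - of_int \<lfloor>log 2 (cdelta P n f)\<rfloor>"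

definition PC :: "nat \<Rightarrow> (bool list \<Rightarrow> bool list \<Rightarrow> bool) \<Rightarrow> real" where
  "PC n f = Inf {ccost P n f | P. c_wue P n f}"

section \<open>Quantum protocols (Yao's model, no prior entanglement)\<close>

text \<open>A system of m qubits numbered 0..m-1; a state is an amplitude function on
  basis strings (boolean lists of length m).\<close>
type_synonym qst = "bool list \<Rightarrow> complex"
type_synonym qop = "bool list \<Rightarrow> bool list \<Rightarrow> complex"

definition qbasis :: "nat \<Rightarrow> bool list set" where
  "qbasis m = {z. length z = m}"

definition restr :: "nat set \<Rightarrow> bool list \<Rightarrow> bool list" where
  "restr S z = map (\<lambda>i. if i \<in> S then z ! i else False) [0..<length z]"

text \<open>U is a unitary on the qubits in S: a matrix indexed by basis strings of the
  S-qubits, with orthonormal columns.\<close>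
definition local_unitary :: "nat \<Rightarrow> nat set \<Rightarrow> qop \<Rightarrow> bool" where
  "local_unitary m S U \<longleftrightarrow>
     (\<forall>v \<in> restr S ` qbasis m. \<forall>v' \<in> restr S ` qbasis m.
        (\<Sum>u \<in> restr S ` qbasis m. cnj (U u v) * U u v') = (if v = v' then 1 else 0))"

text \<open>Applying U (acting on the qubits in S) tensored with the identity on the rest.\<close>
definition apply_op :: "nat \<Rightarrow> nat set \<Rightarrow> qop \<Rightarrow> qst \<Rightarrow> qst" where
  "apply_op m S U \<psi> = (\<lambda>z. \<Sum>w \<in> {w \<in> qbasis m. \<forall>i<m. i \<notin> S \<longrightarrow> w ! i = z ! i}.
       U (restr S z) (restr S w) * \<psi> w)"

text \<open>A round (a, U, q): the speaker (Alice if a, else Bob) applies the unitary U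
  to all the qubits he currently holds and then sends qubit q (which he holds) to
  the other player. OA is the set of qubits currently held by Alice; Bob holds
  the rest.\<close>
fun qvalid :: "nat \<Rightarrow> (bool \<times> qop \<times> nat) list \<Rightarrow> nat set \<Rightarrow> bool" where
  "qvalid m [] OA = True"
| "qvalid m ((a, U, q) # rs) OA =
     (let S = (if a then OA else {0..<m} - OA)
      in local_unitary m S U \<and> q \<in> S \<and>
         qvalid m rs (if a then OA - {q} else insert q OA))"

fun qfinal :: "nat \<Rightarrow> (bool \<times> qop \<times> nat) list \<Rightarrow> nat set \<Rightarrow> qst \<Rightarrow> qst" where
  "qfinal m [] OA \<psi> = \<psi>"
| "qfinal m ((a, U, q) # rs) OA \<psi> =
     (let S = (if a then OA else {0..<m} - OA)
      in qfinal m rs (if a then OA - {q} else insert q OA) (apply_op m S U \<psi>))"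

text \<open>Qubits 0..n-1 hold x (Alice), qubits n..2n-1 hold y (Bob), the remaining
  qubits are initialized to |0>; qalice is the set of qubits Alice initially holds.
  The output is obtained by measuring qubit qout in the computational basis.\<close>
record qprot =
  qnum :: nat
  qalice :: "nat set"
  qrounds :: "(bool \<times> qop \<times> nat) list"
  qout :: nat

definition qinit :: "nat \<Rightarrow> bool list \<Rightarrow> bool list \<Rightarrow> qst" where
  "qinit m x y = (\<lambda>z. if z = x @ y @ replicate (m - length x - length y) False then 1 else 0)"

definition qwf :: "qprot \<Rightarrow> nat \<Rightarrow> bool" where
  "qwf P n \<longleftrightarrow> 2 * n \<le> qnum P \<and> {0..<n} \<subseteq> qalice P \<and> qalice P \<subseteq> {0..<qnum P}
     \<and> qalice P \<inter> {n..<2*n} = {} \<and> qout P < qnum P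
     \<and> qvalid (qnum P) (qrounds P) (qalice P)"

definition qerr :: "qprot \<Rightarrow> (bool list \<Rightarrow> bool list \<Rightarrow> bool) \<Rightarrow> bool list \<Rightarrow> bool list \<Rightarrow> real" where
  "qerr P f x y =
     (let \<psi> = qfinal (qnum P) (qrounds P) (qalice P) (qinit (qnum P) x y)
      in \<Sum>z \<in> {z \<in> qbasis (qnum P). z ! qout P \<noteq> f x y}. (cmod (\<psi> z))\<^sup>2)"

definition qdelta :: "qprot \<Rightarrow> nat \<Rightarrow> (bool list \<Rightarrow> bool list \<Rightarrow> bool) \<Rightarrow> real" where
  "qdelta P n f = 1/2 - Max ((\<lambda>(x, y). qerr P f x y) ` (inputs n \<times> inputs n))"

definition q_wue :: "qprot \<Rightarrow> nat \<Rightarrow> (bool list \<Rightarrow> bool list \<Rightarrow> bool) \<Rightarrow> bool" where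
  "q_wue P n f \<longleftrightarrow> qwf P n \<and> qdelta P n f > 0"

definition qcost :: "qprot \<Rightarrow> nat \<Rightarrow> (bool list \<Rightarrow> bool list \<Rightarrow> bool) \<Rightarrow> real" where
  "qcost P n f = real (length (qrounds P)) - of_int \<lfloor>log 2 (qdelta P n f)\<rfloor>"

definition QC :: "nat \<Rightarrow> (bool list \<Rightarrow> bool list \<Rightarrow> bool) \<Rightarrow> real" where
  "QC n f = Inf {qcost P n f | P. q_wue P n f}"

end

theory Submission
  imports Defs
begin

(* Both kinds of protocols are equivalent, up to constant factors in cost, to sign
   representations of f: functions a t x and b t y with values in [-1, 1], indexed by k-bit
   strings t, such that sign (f x y) * (sum over t of a t x * b t y) >= e * 2^k.

   A classical protocol of depth c and bias d gives such a representation with k = c + 1 and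
   e = d / 2^(c+1): its acceptance probability is a sum over transcripts of the probability
   that Alice's messages follow the transcript times the same for Bob. A quantum protocol with
   r rounds and bias d gives one with k = 2r + 1 and e = d / 4^r: after r rounds the state is a
   sum of 2^r products of vectors of norm at most 1 on Alice's and on Bob's qubits, so the bias
   of the measured qubit is a sum of 4^r products of a complex number of modulus at most 1
   computed by Alice and one computed by Bob; their real and imaginary parts give the 2 * 4^r
   real terms.

   Conversely, given a representation, Alice picks t uniformly and sends it, the players
   produce bits that are 1 with probabilities (1 + a t x) / 2 and (1 + b t y) / 2, classically
   by private coins and quantumly by rotations, and the output is whether the bits agree. This
   has bias e / 2, with k + 2 bits of communication classically and 2k + 2 qubits quantumly.
   Converting a protocol of one kind into one of the other through a representation thus
   increases the cost by at most a factor 8. *)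

lemma finite_inputs [simp]: "finite (inputs n)"
proof -
  have "inputs n = {xs. set xs \<subseteq> UNIV \<and> length xs = n}" by (auto simp: inputs_def)
  then show ?thesis using finite_lists_length_eq[of "UNIV::bool set" n] by simp
qed

lemma inputs_nonempty [simp]: "inputs n \<noteq> {}"
  by (auto simp: inputs_def intro!: exI[of _ "replicate n False"])

lemma card_inputs: "card (inputs n) = 2^n"
proof -
  have "inputs n = {xs. set xs \<subseteq> UNIV \<and> length xs = n}" by (auto simp: inputs_def)
  then show ?thesis using card_lists_length_eq[of "UNIV::bool set" n] by (simp add: card_UNIV_bool)
qed

lemma tl_in_inputs: "s \<in> inputs (Suc n) \<Longrightarrow> tl s \<in> inputs n"
  by (auto simp: inputs_def)

lemma sum_inputs_Suc: "(\<Sum>s\<in>inputs (Suc n). g s) = (\<Sum>t\<in>inputs n. g (True # t) + g (False # t))"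
proof -
  have inputs_Suc: "inputs (Suc n) = (\<lambda>(c, t). c # t) ` (UNIV \<times> inputs n)"
    by (auto simp: inputs_def length_Suc_conv image_iff)
  have inj: "inj_on (\<lambda>(c, t). c # t) (UNIV \<times> inputs n)" by (auto simp: inj_on_def)
  have "(\<Sum>s\<in>inputs (Suc n). g s) = (\<Sum>c\<in>UNIV. \<Sum>t\<in>inputs n. g (c # t))"
    unfolding inputs_Suc sum.reindex[OF inj] by (simp add: sum.cartesian_product case_prod_beta)
  then show ?thesis by (simp add: UNIV_bool sum.distrib add.commute)
qed

lemma sum_inputs_add: "(\<Sum>s\<in>inputs (a + b). g s) = (\<Sum>u\<in>inputs a. \<Sum>v\<in>inputs b. g (u @ v))"
proof (induction a arbitrary: g)
  case 0
  then show ?case by (simp add: inputs_def)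
next
  case (Suc a)
  then show ?case by (simp add: sum_inputs_Suc sum.distrib)
qed

lemma sum_inputs_affine:
  fixes c :: real
  shows "(\<Sum>t\<in>inputs k. (1 + c * g t) / 2^(k+1)) = 1/2 + c * (\<Sum>t\<in>inputs k. g t) / 2^(k+1)"
  by (simp add: sum.distrib sum_distrib_left card_inputs add_divide_distrib flip: sum_divide_distrib)

lemma sum_bool: "(\<Sum>b\<in>UNIV. F b) = F True + F False"
  by (simp add: UNIV_bool add.commute)

lemma cdelta_ge_iff: "e \<le> cdelta P n f \<longleftrightarrow> (\<forall>x\<in>inputs n. \<forall>y\<in>inputs n. cerr P f x y \<le> 1/2 - e)"
  unfolding cdelta_def by (subst le_diff_eq, subst add.commute, subst le_diff_eq[symmetric], subst Max_le_iff) auto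

lemma qdelta_ge_iff: "e \<le> qdelta P n f \<longleftrightarrow> (\<forall>x\<in>inputs n. \<forall>y\<in>inputs n. qerr P f x y \<le> 1/2 - e)"
  unfolding qdelta_def by (subst le_diff_eq, subst add.commute, subst le_diff_eq[symmetric], subst Max_le_iff) auto

lemma cdelta_le_half: "cdelta P n f \<le> 1/2"
proof -
  obtain x where "x \<in> inputs n" using inputs_nonempty by blast
  then have "cerr P f x x \<le> 1/2 - cdelta P n f" using cdelta_ge_iff[of "cdelta P n f" P n f] by simp
  moreover have "0 \<le> cerr P f x x" by (simp add: cerr_def)
  ultimately show ?thesis by linarith
qed

lemma qdelta_le_half: "qdelta P n f \<le> 1/2"
proof -
  obtain x where "x \<in> inputs n" using inputs_nonempty by blast
  then have "qerr P f x x \<le> 1/2 - qdelta P n f" using qdelta_ge_iff[of "qdelta P n f" P n f] by simp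
  moreover have "0 \<le> qerr P f x x" by (simp add: qerr_def Let_def sum_nonneg)
  ultimately show ?thesis by linarith
qed

lemma floor_log2_le_neg1: "0 < d \<Longrightarrow> d \<le> 1/2 \<Longrightarrow> \<lfloor>log 2 d\<rfloor> \<le> -1"
  using log_le_cancel_iff[of 2 d "1/2"] by (simp add: log_divide floor_le_iff)

lemma floor_log2_ge_of_le_divide:
  assumes "0 < d" "d / 2^j \<le> d'"
  shows "\<lfloor>log 2 d\<rfloor> - int j \<le> \<lfloor>log 2 d'\<rfloor>"
proof -
  have "log 2 d - j = log 2 (d / 2^j)" using assms(1) by (simp add: log_divide log_nat_power)
  also have "\<dots> \<le> log 2 d'" using assms by (intro log_mono) auto
  finally show ?thesis by linarith
qed

lemma ccost_nonneg: "c_wue P n f \<Longrightarrow> 0 \<le> ccost P n f"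
  using floor_log2_le_neg1[of "cdelta P n f"] cdelta_le_half[of P n f] by (simp add: ccost_def c_wue_def)

lemma qcost_nonneg: "q_wue P n f \<Longrightarrow> 0 \<le> qcost P n f"
  using floor_log2_le_neg1[of "qdelta P n f"] qdelta_le_half[of P n f] by (simp add: qcost_def q_wue_def)

lemma Inf_le_scaled_Inf:
  fixes X Y :: "real set"
  assumes "X \<noteq> {}" "bdd_below Y" "0 < c" "\<And>x. x \<in> X \<Longrightarrow> \<exists>y\<in>Y. y \<le> c * x"
  shows "Inf Y \<le> c * Inf X"
proof -
  have "Inf Y / c \<le> Inf X"
  proof (rule cInf_greatest[OF assms(1)])
    fix x assume "x \<in> X"
    then obtain y where "y \<in> Y" "y \<le> c * x" using assms(4) by blast
    then have "Inf Y \<le> c * x" using cInf_lower[OF _ assms(2)] order_trans by blast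
    then show "Inf Y / c \<le> x" using assms(3) by (simp add: divide_le_eq mult.commute)
  qed
  then show ?thesis using assms(3) by (simp add: divide_le_eq mult.commute)
qed

section \<open>Sign representations\<close>

definition bsign :: "bool \<Rightarrow> real" where
  "bsign b = (if b then 1 else -1)"

definition sign_rep :: "nat \<Rightarrow> (bool list \<Rightarrow> bool list \<Rightarrow> bool) \<Rightarrow> nat \<Rightarrow> real \<Rightarrow> bool" where
  "sign_rep n f k e \<longleftrightarrow> e > 0 \<and> (\<exists>a b :: bool list \<Rightarrow> bool list \<Rightarrow> real.
     (\<forall>t\<in>inputs k. \<forall>x\<in>inputs n. \<bar>a t x\<bar> \<le> 1) \<and> (\<forall>t\<in>inputs k. \<forall>y\<in>inputs n. \<bar>b t y\<bar> \<le> 1) \<and>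
     (\<forall>x\<in>inputs n. \<forall>y\<in>inputs n. bsign (f x y) * (\<Sum>t\<in>inputs k. a t x * b t y) \<ge> e * 2^k))"

lemma sign_repE:
  assumes "sign_rep n f k e"
  obtains a b where "0 < e" "\<And>t x. \<bar>a t x\<bar> \<le> 1" "\<And>t y. \<bar>b t y\<bar> \<le> 1"
    "\<And>x y. x \<in> inputs n \<Longrightarrow> y \<in> inputs n \<Longrightarrow> e * 2^k \<le> bsign (f x y) * (\<Sum>t\<in>inputs k. a t x * b t y)"
proof -
  obtain a b where e: "0 < e" and a: "\<forall>t\<in>inputs k. \<forall>x\<in>inputs n. \<bar>a t x\<bar> \<le> 1"
    and b: "\<forall>t\<in>inputs k. \<forall>y\<in>inputs n. \<bar>b t y\<bar> \<le> 1"
    and margin: "\<forall>x\<in>inputs n. \<forall>y\<in>inputs n. e * 2^k \<le> bsign (f x y) * (\<Sum>t\<in>inputs k. a t x * b t y)"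
    using assms unfolding sign_rep_def by blast
  define a' where "a' t x = (if t \<in> inputs k \<and> x \<in> inputs n then a t x else 0)" for t x
  define b' where "b' t y = (if t \<in> inputs k \<and> y \<in> inputs n then b t y else 0)" for t y
  have "(\<Sum>t\<in>inputs k. a' t x * b' t y) = (\<Sum>t\<in>inputs k. a t x * b t y)"
    if "x \<in> inputs n" "y \<in> inputs n" for x y
    using that by (intro sum.cong) (auto simp: a'_def b'_def)
  then show thesis using that[of a' b'] e a b margin by (auto simp: a'_def b'_def)
qed

lemma sign_rep_trivial: "sign_rep n f n (1 / 2^n)"
proof -
  define a where "a t x = (if t = x then 1 else 0 :: real)" for t x :: "bool list"
  define b where "b t y = bsign (f t y)" for t y
  have "(\<Sum>t\<in>inputs n. a t x * b t y) = (\<Sum>t\<in>inputs n. if t = x then bsign (f t y) else 0)" for x y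
    by (intro sum.cong) (auto simp: a_def b_def)
  then have "(\<Sum>t\<in>inputs n. a t x * b t y) = bsign (f x y)" if "x \<in> inputs n" for x y
    using that by (simp add: sum.delta')
  then show ?thesis unfolding sign_rep_def
    by (intro conjI exI[of _ a] exI[of _ b]) (auto simp: a_def b_def bsign_def)
qed

section \<open>Classical protocols\<close>

definition cacc :: "cprot \<Rightarrow> bool list \<Rightarrow> bool list \<Rightarrow> real" where
  "cacc P x y = measure_pmf.prob (pair_pmf (crandA P) (crandB P))
      {(ra, rb). crun (ctr P) (cmsgA P x ra) (cmsgB P y rb) []}"

lemma cerr_cacc: "cerr P f x y = 1/2 - bsign (f x y) * (cacc P x y - 1/2)"
proof (cases "f x y")
  case True
  let ?M = "pair_pmf (crandA P) (crandB P)"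
  let ?A = "{(ra, rb). crun (ctr P) (cmsgA P x ra) (cmsgB P y rb) []}"
  have "space ?M - ?A = {(ra, rb). crun (ctr P) (cmsgA P x ra) (cmsgB P y rb) [] \<noteq> f x y}"
    using True by auto
  then have "cerr P f x y = measure_pmf.prob ?M (space ?M - ?A)" by (simp add: cerr_def)
  also have "\<dots> = 1 - cacc P x y" unfolding cacc_def by (rule measure_pmf.prob_compl) simp
  finally show ?thesis using True by (simp add: bsign_def)
qed (simp add: cerr_def cacc_def bsign_def)

text \<open>A run of depth at most d accepts iff some transcript t of length d (padded with False
  below the leaf) passes both tests: alice_path checks Alice's bits and the leaf label,
  bob_path checks Bob's bits. Hence the accepting event is a disjoint union of rectangles.\<close>

fun alice_path :: "ctree \<Rightarrow> (bool list \<Rightarrow> bool) \<Rightarrow> bool list \<Rightarrow> bool list \<Rightarrow> bool" where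
  "alice_path (CLeaf c) a tr t = (c \<and> (\<forall>b\<in>set t. \<not> b))"
| "alice_path (ANode l r) a tr [] = False"
| "alice_path (ANode l r) a tr (b # t) = (a tr = b \<and> alice_path (if b then r else l) a (tr @ [b]) t)"
| "alice_path (BNode l r) a tr [] = False"
| "alice_path (BNode l r) a tr (b # t) = alice_path (if b then r else l) a (tr @ [b]) t"

fun bob_path :: "ctree \<Rightarrow> (bool list \<Rightarrow> bool) \<Rightarrow> bool list \<Rightarrow> bool list \<Rightarrow> bool" where
  "bob_path (CLeaf c) a tr t = True"
| "bob_path (ANode l r) a tr [] = False"
| "bob_path (ANode l r) a tr (b # t) = bob_path (if b then r else l) a (tr @ [b]) t"
| "bob_path (BNode l r) a tr [] = False"
| "bob_path (BNode l r) a tr (b # t) = (a tr = b \<and> bob_path (if b then r else l) a (tr @ [b]) t)"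

lemma ex_length_Suc: "(\<exists>t. length t = Suc d \<and> P t) \<longleftrightarrow> (\<exists>c t. length t = d \<and> P (c # t))"
  by (metis length_Suc_conv)

lemma crun_iff_path:
  "cdepth T \<le> d \<Longrightarrow> crun T a b tr \<longleftrightarrow> (\<exists>t. length t = d \<and> alice_path T a tr t \<and> bob_path T b tr t)"
proof (induction T arbitrary: tr d)
  case (CLeaf c)
  show ?case by (auto intro!: exI[of _ "replicate d False"])
next
  case (ANode l r)
  then obtain d' where d: "d = Suc d'" "cdepth l \<le> d'" "cdepth r \<le> d'" by (cases d) auto
  have "(\<exists>t. length t = d \<and> alice_path (ANode l r) a tr t \<and> bob_path (ANode l r) b tr t) \<longleftrightarrow>
      (\<exists>t. length t = d' \<and> alice_path (if a tr then r else l) a (tr @ [a tr]) t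
         \<and> bob_path (if a tr then r else l) b (tr @ [a tr]) t)"
    unfolding d(1) ex_length_Suc by simp
  then show ?case using ANode.IH(1)[OF d(2)] ANode.IH(2)[OF d(3)] by (cases "a tr") auto
next
  case (BNode l r)
  then obtain d' where d: "d = Suc d'" "cdepth l \<le> d'" "cdepth r \<le> d'" by (cases d) auto
  have "(\<exists>t. length t = d \<and> alice_path (BNode l r) a tr t \<and> bob_path (BNode l r) b tr t) \<longleftrightarrow>
      (\<exists>t. length t = d' \<and> alice_path (if b tr then r else l) a (tr @ [b tr]) t
         \<and> bob_path (if b tr then r else l) b (tr @ [b tr]) t)"
    unfolding d(1) ex_length_Suc by simp
  then show ?case using BNode.IH(1)[OF d(2)] BNode.IH(2)[OF d(3)] by (cases "b tr") auto
qed

lemma path_unique: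
  "length t = length t' \<Longrightarrow> alice_path T a tr t \<Longrightarrow> bob_path T b tr t \<Longrightarrow>
   alice_path T a tr t' \<Longrightarrow> bob_path T b tr t' \<Longrightarrow> t = t'"
proof (induction T arbitrary: tr t t')
  case (CLeaf c)
  then have "t = replicate (length t) False" "t' = replicate (length t') False"
    by (auto intro: replicate_eqI)
  then show ?case using CLeaf(1) by simp
next
  case (ANode l r)
  obtain c t1 c' t1' where t: "t = c # t1" "t' = c' # t1'"
    using ANode.prems(2,4) by (cases t; cases t') simp_all
  then have "c' = c" using ANode.prems(2,4) by simp
  moreover have "t1 = t1'"
    using ANode.IH(1)[where tr="tr @ [c]" and t=t1 and t'=t1'] ANode.IH(2)[where tr="tr @ [c]" and t=t1 and t'=t1']
      ANode.prems t \<open>c' = c\<close>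
    by (cases c) simp_all
  ultimately show ?case using t by simp
next
  case (BNode l r)
  obtain c t1 c' t1' where t: "t = c # t1" "t' = c' # t1'"
    using BNode.prems(2,4) by (cases t; cases t') simp_all
  then have "c' = c" using BNode.prems(3,5) by simp
  moreover have "t1 = t1'"
    using BNode.IH(1)[where tr="tr @ [c]" and t=t1 and t'=t1'] BNode.IH(2)[where tr="tr @ [c]" and t=t1 and t'=t1']
      BNode.prems t \<open>c' = c\<close>
    by (cases c) simp_all
  ultimately show ?case using t by simp
qed

lemma cacc_eq_sum_paths:
  assumes "cdepth (ctr P) \<le> d"
  shows "cacc P x y = (\<Sum>t\<in>inputs d.
     measure_pmf.prob (crandA P) {ra. alice_path (ctr P) (cmsgA P x ra) [] t} *
     measure_pmf.prob (crandB P) {rb. bob_path (ctr P) (cmsgB P y rb) [] t})"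
proof -
  let ?E = "\<lambda>t. {ra. alice_path (ctr P) (cmsgA P x ra) [] t} \<times> {rb. bob_path (ctr P) (cmsgB P y rb) [] t}"
  have "{(ra, rb). crun (ctr P) (cmsgA P x ra) (cmsgB P y rb) []} = (\<Union>t\<in>inputs d. ?E t)"
    using crun_iff_path[OF assms] by (auto simp: inputs_def)
  moreover have "disjoint_family_on ?E (inputs d)"
    unfolding disjoint_family_on_def using path_unique by (fastforce simp: inputs_def)
  ultimately show ?thesis unfolding cacc_def
    by (simp add: measure_pmf.finite_measure_finite_Union measure_pmf_prob_product)
qed

lemma sign_rep_of_cprot:
  assumes "c_wue P n f"
  shows "sign_rep n f (cdepth (ctr P) + 1) (cdelta P n f / 2^(cdepth (ctr P) + 1))"
proof -
  define d where "d = cdepth (ctr P)"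
  define PA where "PA t x = measure_pmf.prob (crandA P) {ra. alice_path (ctr P) (cmsgA P x ra) [] t}" for t x
  define PB where "PB t y = measure_pmf.prob (crandB P) {rb. bob_path (ctr P) (cmsgB P y rb) [] t}" for t y
  \<comment> \<open>the transcripts with first bit False contribute the constant term -1/2\<close>
  define a where "a s x = (if hd s then PA (tl s) x else if tl s = replicate d False then -1 else 0)" for s x
  define b where "b s y = (if hd s then PB (tl s) y else 1/2)" for s y
  have zeros: "(\<Sum>t\<in>inputs d. (if t = replicate d False then -1 else 0) / 2) = (-1/2::real)"
    unfolding sum_divide_distrib[symmetric] by (subst sum.delta[OF finite_inputs]) (simp add: inputs_def)
  have sum_ab: "(\<Sum>s\<in>inputs (d + 1). a s x * b s y) = cacc P x y - 1/2" for x y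
  proof -
    have "(\<Sum>s\<in>inputs (d + 1). a s x * b s y) =
        (\<Sum>t\<in>inputs d. PA t x * PB t y + (if t = replicate d False then -1 else 0) / 2)"
      using sum_inputs_Suc[where n=d and g="\<lambda>s. a s x * b s y"] by (simp add: a_def b_def)
    also have "\<dots> = (\<Sum>t\<in>inputs d. PA t x * PB t y) - 1/2"
      by (simp add: sum.distrib zeros)
    also have "(\<Sum>t\<in>inputs d. PA t x * PB t y) = cacc P x y"
      unfolding PA_def PB_def d_def by (rule cacc_eq_sum_paths[symmetric]) simp
    finally show ?thesis .
  qed
  have "bsign (f x y) * (\<Sum>s\<in>inputs (d + 1). a s x * b s y) \<ge> cdelta P n f"
    if "x \<in> inputs n" "y \<in> inputs n" for x y
  proof -
    have "cerr P f x y \<le> 1/2 - cdelta P n f" using that cdelta_ge_iff[of "cdelta P n f" P n f] by blast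
    then show ?thesis unfolding sum_ab by (simp add: cerr_cacc)
  qed
  moreover have "\<bar>a t x\<bar> \<le> 1" "\<bar>b t x\<bar> \<le> 1" for t x by (simp_all add: a_def PA_def b_def PB_def)
  ultimately show ?thesis using assms unfolding sign_rep_def d_def c_wue_def
    by (intro conjI exI[of _ a] exI[of _ b]) auto
qed

lemma pmf_realizing_probabilities:
  fixes p :: "'j \<Rightarrow> real"
  assumes "finite J" "\<forall>j\<in>J. 0 \<le> p j \<and> p j \<le> 1"
  shows "\<exists>(u :: nat pmf) S. \<forall>j\<in>J. measure_pmf.prob u (S j) = p j"
  using assms
proof (induction J rule: finite_induct)
  case empty
  then show ?case by auto
next
  case (insert j0 J)
  then obtain u :: "nat pmf" and S where uS: "\<forall>j\<in>J. measure_pmf.prob u (S j) = p j" by auto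
  \<comment> \<open>add an independent coin of bias p j0\<close>
  define enc :: "nat \<times> bool \<Rightarrow> nat" where "enc = (\<lambda>(a, b). prod_encode (a, if b then 1 else 0))"
  define u' where "u' = map_pmf enc (pair_pmf u (bernoulli_pmf (p j0)))"
  define S' where "S' j = (if j = j0 then {m. snd (prod_decode m) = 1} else {m. fst (prod_decode m) \<in> S j})" for j
  have "measure_pmf.prob u' (S' j) = p j" if "j \<in> insert j0 J" for j
  proof (cases "j = j0")
    case True
    have "enc -` S' j = UNIV \<times> {True}" using True by (auto simp: enc_def S'_def split: if_splits)
    then show ?thesis unfolding u'_def measure_map_pmf using True insert.prems
      by (simp add: measure_pmf_prob_product measure_pmf_single pmf_bernoulli_True)
  next
    case False
    have "enc -` S' j = S j \<times> UNIV" using False by (auto simp: enc_def S'_def)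
    then show ?thesis unfolding u'_def measure_map_pmf using False that uS
      by (simp add: measure_pmf_prob_product)
  qed
  then show ?case by blast
qed

fun compare_tree :: "nat \<Rightarrow> ctree" where
  "compare_tree 0 = ANode (BNode (CLeaf True) (CLeaf False)) (BNode (CLeaf False) (CLeaf True))"
| "compare_tree (Suc k) = ANode (compare_tree k) (compare_tree k)"

lemma cdepth_compare_tree: "cdepth (compare_tree k) = k + 2"
  by (induction k) auto

lemma crun_compare_tree:
  "length t = k \<Longrightarrow> (\<forall>i<k. a (tr @ take i t) = t ! i) \<Longrightarrow>
   crun (compare_tree k) a b tr \<longleftrightarrow> a (tr @ t) = b (tr @ t @ [a (tr @ t)])"
proof (induction k arbitrary: tr t)
  case 0
  then show ?case by auto
next
  case (Suc k)
  then obtain c t' where t: "t = c # t'" "length t' = k" by (cases t) auto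
  have "a tr = c" using Suc.prems(2)[rule_format, of 0] t by simp
  moreover have "\<forall>i<k. a ((tr @ [c]) @ take i t') = t' ! i"
    using Suc.prems(2) t by (auto dest: spec[of _ "Suc _"])
  ultimately show ?case using Suc.IH[OF t(2)] t by (cases c) auto
qed

text \<open>Alice draws t uniformly from the k-bit strings, sends it, and then sends a coin with
  heads-event SA (t, x); Bob outputs whether his coin with heads-event SB (t, y) agrees.
  Alice's randomness, the pair of t and her coin, is encoded as a natural number.\<close>

definition index_of :: "nat \<Rightarrow> nat \<Rightarrow> bool list" where
  "index_of k r = (let s = fst (from_nat r :: bool list \<times> nat) in if length s = k then s else replicate k False)"

definition coin_of :: "nat \<Rightarrow> nat" where
  "coin_of r = snd (from_nat r :: bool list \<times> nat)"

definition compare_prot ::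
  "nat \<Rightarrow> nat pmf \<Rightarrow> (bool list \<times> bool list \<Rightarrow> nat set) \<Rightarrow> nat pmf \<Rightarrow> (bool list \<times> bool list \<Rightarrow> nat set) \<Rightarrow> cprot"
where
  "compare_prot k uA SA uB SB =
     \<lparr>ctr = compare_tree k,
      crandA = map_pmf (to_nat :: bool list \<times> nat \<Rightarrow> nat) (pair_pmf (pmf_of_set (inputs k)) uA),
      crandB = uB,
      cmsgA = (\<lambda>x r tr. if length tr < k then index_of k r ! length tr else coin_of r \<in> SA (index_of k r, x)),
      cmsgB = (\<lambda>y r tr. r \<in> SB (take k tr, y))\<rparr>"

lemma length_index_of [simp]: "length (index_of k r) = k"
  by (simp add: index_of_def Let_def)

lemma prob_index_coin:
  assumes "t \<in> inputs k"
  shows "measure_pmf.prob (map_pmf (to_nat :: bool list \<times> nat \<Rightarrow> nat) (pair_pmf (pmf_of_set (inputs k)) u))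
      {r. index_of k r = t \<and> (coin_of r \<in> S) = c} = measure_pmf.prob u {w. (w \<in> S) = c} / 2^k"
proof -
  let ?T = "{s. (if length s = k then s else replicate k False) = t}"
  have "(to_nat :: bool list \<times> nat \<Rightarrow> nat) -` {r. index_of k r = t \<and> (coin_of r \<in> S) = c} = ?T \<times> {w. (w \<in> S) = c}"
    by (auto simp: index_of_def coin_of_def)
  moreover have "inputs k \<inter> ?T = {t}" using assms by (auto simp: inputs_def)
  ultimately show ?thesis
    by (simp add: measure_map_pmf measure_pmf_prob_product measure_pmf_of_set card_inputs)
qed

lemma prob_mem_eq:
  "measure_pmf.prob M {r. (r \<in> S) = c} = (if c then measure_pmf.prob M S else 1 - measure_pmf.prob M S)"
  using measure_pmf.prob_compl[of S M] by (cases c) (auto simp: Compl_eq_Diff_UNIV[symmetric] Collect_neg_eq)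

lemma cacc_compare_prot:
  assumes pA: "\<And>t. t \<in> inputs k \<Longrightarrow> measure_pmf.prob uA (SA (t, x)) = (1 + a t) / 2"
    and pB: "\<And>t. t \<in> inputs k \<Longrightarrow> measure_pmf.prob uB (SB (t, y)) = (1 + b t) / 2"
  shows "cacc (compare_prot k uA SA uB SB) x y = 1/2 + (\<Sum>t\<in>inputs k. a t * b t) / 2^(k+1)"
proof -
  let ?P = "compare_prot k uA SA uB SB"
  define E where "E tc = {r. index_of k r = fst tc \<and> (coin_of r \<in> SA (fst tc, x)) = snd tc}
    \<times> {r. (r \<in> SB (fst tc, y)) = snd tc}" for tc
  have "crun (ctr ?P) (cmsgA ?P x ra) (cmsgB ?P y rb) [] \<longleftrightarrow>
      (coin_of ra \<in> SA (index_of k ra, x)) = (rb \<in> SB (index_of k ra, y))" for ra rb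
    using crun_compare_tree[of "index_of k ra" k "cmsgA ?P x ra" "[]" "cmsgB ?P y rb"]
    by (simp add: compare_prot_def)
  then have accept: "{(ra, rb). crun (ctr ?P) (cmsgA ?P x ra) (cmsgB ?P y rb) []} = (\<Union>tc\<in>inputs k \<times> UNIV. E tc)"
    by (auto simp: E_def inputs_def)
  have "disjoint_family_on E (inputs k \<times> UNIV)"
    by (auto simp: disjoint_family_on_def E_def)
  then have "cacc ?P x y = (\<Sum>tc\<in>inputs k \<times> UNIV. measure_pmf.prob (pair_pmf (crandA ?P) (crandB ?P)) (E tc))"
    unfolding cacc_def accept by (subst measure_pmf.finite_measure_finite_Union) auto
  also have "\<dots> = (\<Sum>t\<in>inputs k. \<Sum>c\<in>UNIV. measure_pmf.prob (crandA ?P)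
      {r. index_of k r = t \<and> (coin_of r \<in> SA (t, x)) = c} * measure_pmf.prob uB {r. (r \<in> SB (t, y)) = c})"
    by (simp add: E_def measure_pmf_prob_product sum.cartesian_product case_prod_beta compare_prot_def
        del: measure_map_pmf)
  also have "\<dots> = (\<Sum>t\<in>inputs k. (1 + 1 * (a t * b t)) / 2^(k+1))"
  proof (rule sum.cong[OF refl])
    fix t assume t: "t \<in> inputs k"
    have A: "measure_pmf.prob (crandA ?P) {r. index_of k r = t \<and> (coin_of r \<in> SA (t, x)) = c} =
        (if c then (1 + a t) / 2 else 1 - (1 + a t) / 2) / 2^k" for c
      unfolding compare_prot_def cprot.simps prob_index_coin[OF t] prob_mem_eq pA[OF t] ..
    have B: "measure_pmf.prob uB {r. (r \<in> SB (t, y)) = c} = (if c then (1 + b t) / 2 else 1 - (1 + b t) / 2)" for c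
      unfolding prob_mem_eq pB[OF t] ..
    show "(\<Sum>c\<in>UNIV. measure_pmf.prob (crandA ?P) {r. index_of k r = t \<and> (coin_of r \<in> SA (t, x)) = c}
        * measure_pmf.prob uB {r. (r \<in> SB (t, y)) = c}) = (1 + 1 * (a t * b t)) / 2^(k+1)"
      unfolding sum_bool A B by (simp add: field_simps)
  qed
  finally show ?thesis unfolding sum_inputs_affine by simp
qed

lemma cprot_of_sign_rep:
  assumes "sign_rep n f k e"
  shows "\<exists>P. c_wue P n f \<and> cdepth (ctr P) = k + 2 \<and> e / 2 \<le> cdelta P n f"
proof -
  obtain a b where e: "0 < e" and a: "\<And>t x. \<bar>a t x\<bar> \<le> 1" and b: "\<And>t y. \<bar>b t y\<bar> \<le> 1"
    and margin: "\<And>x y. x \<in> inputs n \<Longrightarrow> y \<in> inputs n \<Longrightarrow> e * 2^k \<le> bsign (f x y) * (\<Sum>t\<in>inputs k. a t x * b t y)"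
    using assms by (rule sign_repE) (rule that)
  have "0 \<le> (1 + a t x) / 2 \<and> (1 + a t x) / 2 \<le> 1" "0 \<le> (1 + b t x) / 2 \<and> (1 + b t x) / 2 \<le> 1" for t x
    using a[of t x] b[of t x] by (simp_all add: abs_le_iff)
  then obtain uA uB :: "nat pmf" and SA SB
    where uA: "\<forall>j\<in>inputs k \<times> inputs n. measure_pmf.prob uA (SA j) = (1 + a (fst j) (snd j)) / 2"
      and uB: "\<forall>j\<in>inputs k \<times> inputs n. measure_pmf.prob uB (SB j) = (1 + b (fst j) (snd j)) / 2"
    using pmf_realizing_probabilities[of "inputs k \<times> inputs n" "\<lambda>j. (1 + a (fst j) (snd j)) / 2"]
      pmf_realizing_probabilities[of "inputs k \<times> inputs n" "\<lambda>j. (1 + b (fst j) (snd j)) / 2"]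
    by auto
  define P where "P = compare_prot k uA SA uB SB"
  have "cerr P f x y \<le> 1/2 - e/2" if xy: "x \<in> inputs n" "y \<in> inputs n" for x y
  proof -
    have "cacc P x y = 1/2 + (\<Sum>t\<in>inputs k. a t x * b t y) / 2^(k+1)"
      unfolding P_def using uA uB xy by (intro cacc_compare_prot) auto
    moreover have "e / 2 \<le> bsign (f x y) * (\<Sum>t\<in>inputs k. a t x * b t y) / 2^(k+1)"
      using margin[OF xy] by (simp add: field_simps)
    ultimately show ?thesis by (simp add: cerr_cacc)
  qed
  then have "e / 2 \<le> cdelta P n f" by (simp add: cdelta_ge_iff)
  then show ?thesis using e
    by (intro exI[of _ P]) (simp add: c_wue_def P_def compare_prot_def cdepth_compare_tree)
qed

section \<open>Quantum protocols\<close>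

text \<open>A function of basis strings that depends only on the qubits in S is a vector on those
  qubits: its basis is represented by local_basis m S, the strings vanishing outside S, and
  local_norm m S is its squared norm.\<close>

definition local_basis :: "nat \<Rightarrow> nat set \<Rightarrow> bool list set" where
  "local_basis m S = restr S ` qbasis m"

definition overwrite :: "nat set \<Rightarrow> bool list \<Rightarrow> bool list \<Rightarrow> bool list" where
  "overwrite S z v = map (\<lambda>i. if i \<in> S then v!i else z!i) [0..<length z]"

definition depends_on :: "nat \<Rightarrow> nat set \<Rightarrow> (bool list \<Rightarrow> 'a) \<Rightarrow> bool" where
  "depends_on m S g \<longleftrightarrow> (\<forall>z\<in>qbasis m. \<forall>w\<in>qbasis m. (\<forall>i<m. i \<in> S \<longrightarrow> z!i = w!i) \<longrightarrow> g z = g w)"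

definition local_norm :: "nat \<Rightarrow> nat set \<Rightarrow> (bool list \<Rightarrow> complex) \<Rightarrow> real" where
  "local_norm m S g = (\<Sum>v\<in>local_basis m S. (cmod (g v))\<^sup>2)"

lemma finite_qbasis: "finite (qbasis m)"
proof -
  have "qbasis m = {xs. set xs \<subseteq> (UNIV::bool set) \<and> length xs = m}" by (auto simp: qbasis_def)
  then show ?thesis using finite_lists_length_eq[of "UNIV::bool set" m] by simp
qed

lemma length_restr[simp]: "length (restr S z) = length z"
  by (simp add: restr_def)

lemma nth_restr[simp]: "i < length z \<Longrightarrow> restr S z ! i = (if i \<in> S then z!i else False)"
  by (simp add: restr_def)

lemma length_overwrite[simp]: "length (overwrite S z v) = length z"
  by (simp add: overwrite_def)

lemma nth_overwrite[simp]: "i < length z \<Longrightarrow> overwrite S z v ! i = (if i \<in> S then v!i else z!i)"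
  by (simp add: overwrite_def)

lemma local_basis_iff: "v \<in> local_basis m S \<longleftrightarrow> length v = m \<and> (\<forall>i<m. i \<notin> S \<longrightarrow> \<not> v!i)"
proof
  assume "v \<in> local_basis m S"
  then show "length v = m \<and> (\<forall>i<m. i \<notin> S \<longrightarrow> \<not> v!i)" by (auto simp: local_basis_def qbasis_def)
next
  assume a: "length v = m \<and> (\<forall>i<m. i \<notin> S \<longrightarrow> \<not> v!i)"
  then have "restr S v = v" by (auto simp: list_eq_iff_nth_eq)
  then show "v \<in> local_basis m S"
    using a unfolding local_basis_def qbasis_def by (metis (mono_tags, lifting) image_eqI mem_Collect_eq)
qed

lemma finite_local_basis: "finite (local_basis m S)"
  by (simp add: local_basis_def finite_qbasis)

lemma local_basis_subset: "local_basis m S \<subseteq> qbasis m"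
  by (auto simp: local_basis_iff qbasis_def)

lemma restr_local_basis: "v \<in> local_basis m S \<Longrightarrow> restr S v = v"
  by (auto simp: local_basis_iff list_eq_iff_nth_eq)

lemma restr_in_local_basis: "z \<in> qbasis m \<Longrightarrow> restr S z \<in> local_basis m S"
  by (simp add: local_basis_def)

lemma local_basis_cong: "(\<And>i. i < m \<Longrightarrow> i \<in> S \<longleftrightarrow> i \<in> S') \<Longrightarrow> local_basis m S = local_basis m S'"
  by (auto simp: local_basis_iff)

lemma depends_on_mono: "depends_on m S g \<Longrightarrow> (\<And>i. i < m \<Longrightarrow> i \<in> S \<Longrightarrow> i \<in> S') \<Longrightarrow> depends_on m S' g"
  unfolding depends_on_def by blast

lemma local_norm_cong: "(\<And>i. i < m \<Longrightarrow> i \<in> S \<longleftrightarrow> i \<in> S') \<Longrightarrow> local_norm m S g = local_norm m S' g"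
  unfolding local_norm_def using local_basis_cong by metis

lemma overwrite_in_qbasis: "z \<in> qbasis m \<Longrightarrow> overwrite S z v \<in> qbasis m"
  by (simp add: qbasis_def)

lemma apply_op_overwrite:
  assumes z: "z \<in> qbasis m"
  shows "apply_op m S U \<psi> z = (\<Sum>v\<in>local_basis m S. U (restr S z) v * \<psi> (overwrite S z v))"
  unfolding apply_op_def
proof (rule sum.reindex_bij_witness[where i="overwrite S z" and j="restr S"])
  fix w assume w: "w \<in> {w \<in> qbasis m. \<forall>i<m. i \<notin> S \<longrightarrow> w ! i = z ! i}"
  then show e: "overwrite S z (restr S w) = w" using z by (auto simp: qbasis_def list_eq_iff_nth_eq)
  show "restr S w \<in> local_basis m S" using w by (simp add: local_basis_def)
  show "U (restr S z) (restr S w) * \<psi> (overwrite S z (restr S w)) = U (restr S z) (restr S w) * \<psi> w"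
    by (simp add: e)
next
  fix v assume v: "v \<in> local_basis m S"
  then show "restr S (overwrite S z v) = v" using z by (auto simp: qbasis_def list_eq_iff_nth_eq local_basis_iff)
  show "overwrite S z v \<in> {w \<in> qbasis m. \<forall>i<m. i \<notin> S \<longrightarrow> w ! i = z ! i}"
    using z v by (auto simp: qbasis_def)
qed

lemma sum_qbasis_split:
  "(\<Sum>z\<in>qbasis m. F z) = (\<Sum>c\<in>local_basis m (-S). \<Sum>u\<in>local_basis m S. F (overwrite S c u))"
proof -
  have "(\<Sum>z\<in>qbasis m. F z) = (\<Sum>p\<in>local_basis m (-S) \<times> local_basis m S. F (overwrite S (fst p) (snd p)))"
  proof (rule sum.reindex_bij_witness[where i="\<lambda>p. overwrite S (fst p) (snd p)" and j="\<lambda>z. (restr (-S) z, restr S z)"])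
    fix z assume z: "z \<in> qbasis m"
    then show "overwrite S (fst (restr (- S) z, restr S z)) (snd (restr (- S) z, restr S z)) = z"
      by (auto simp: qbasis_def list_eq_iff_nth_eq)
    show "(restr (- S) z, restr S z) \<in> local_basis m (- S) \<times> local_basis m S" using z by (simp add: local_basis_def)
    show "F (overwrite S (fst (restr (- S) z, restr S z)) (snd (restr (- S) z, restr S z))) = F z"
      using z by (auto simp: qbasis_def intro!: arg_cong[where f=F] simp: list_eq_iff_nth_eq)
  next
    fix p assume p: "p \<in> local_basis m (- S) \<times> local_basis m S"
    then show "(restr (- S) (overwrite S (fst p) (snd p)), restr S (overwrite S (fst p) (snd p))) = p"
      by (cases p) (auto simp: local_basis_iff list_eq_iff_nth_eq)
    show "overwrite S (fst p) (snd p) \<in> qbasis m" using p by (auto simp: local_basis_iff qbasis_def)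
  qed
  also have "\<dots> = (\<Sum>c\<in>local_basis m (-S). \<Sum>u\<in>local_basis m S. F (overwrite S c u))"
    by (simp add: sum.cartesian_product case_prod_beta)
  finally show ?thesis .
qed

lemma depends_on_overwrite_in:
  assumes d: "depends_on m S g" and c: "c \<in> qbasis m" and u: "u \<in> local_basis m S"
  shows "g (overwrite S c u) = g u"
proof -
  have "overwrite S c u \<in> qbasis m" "u \<in> qbasis m" using c u local_basis_subset by (auto simp: qbasis_def)
  moreover have "\<forall>i<m. i \<in> S \<longrightarrow> overwrite S c u ! i = u ! i" using c by (simp add: qbasis_def)
  ultimately show ?thesis using d unfolding depends_on_def by blast
qed

lemma depends_on_overwrite_out:
  assumes d: "depends_on m (-S) h" and c: "c \<in> qbasis m"
  shows "h (overwrite S c u) = h c"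
proof -
  have "overwrite S c u \<in> qbasis m" using c by (auto simp: qbasis_def)
  moreover have "\<forall>i<m. i \<in> -S \<longrightarrow> overwrite S c u ! i = c ! i" using c by (simp add: qbasis_def)
  ultimately show ?thesis using d c unfolding depends_on_def by blast
qed

lemma sum_qbasis_product:
  fixes g h :: "bool list \<Rightarrow> complex"
  assumes "depends_on m S g" "depends_on m (-S) h"
  shows "(\<Sum>z\<in>qbasis m. g z * h z) = (\<Sum>u\<in>local_basis m S. g u) * (\<Sum>c\<in>local_basis m (-S). h c)"
proof -
  have "(\<Sum>z\<in>qbasis m. g z * h z) = (\<Sum>c\<in>local_basis m (-S). \<Sum>u\<in>local_basis m S. g (overwrite S c u) * h (overwrite S c u))"
    by (rule sum_qbasis_split)
  also have "\<dots> = (\<Sum>c\<in>local_basis m (-S). \<Sum>u\<in>local_basis m S. g u * h c)"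
    using local_basis_subset[of m "-S"] depends_on_overwrite_in[OF assms(1)] depends_on_overwrite_out[OF assms(2)]
    by (intro sum.cong refl) auto
  also have "\<dots> = (\<Sum>u\<in>local_basis m S. g u) * (\<Sum>c\<in>local_basis m (-S). h c)"
    by (subst sum.swap) (simp add: sum_product)
  finally show ?thesis .
qed

lemma sum_norm_unitary:
  fixes U :: "'a \<Rightarrow> 'a \<Rightarrow> complex"
  assumes fin: "finite R" and un: "\<forall>v\<in>R. \<forall>v'\<in>R. (\<Sum>u\<in>R. cnj (U u v) * U u v') = (if v = v' then 1 else 0)"
  shows "(\<Sum>u\<in>R. (cmod (\<Sum>v\<in>R. U u v * g v))\<^sup>2) = (\<Sum>v\<in>R. (cmod (g v))\<^sup>2)"
proof -
  have "complex_of_real (\<Sum>u\<in>R. (cmod (\<Sum>v\<in>R. U u v * g v))\<^sup>2) =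
      (\<Sum>u\<in>R. (\<Sum>v'\<in>R. U u v' * g v') * cnj (\<Sum>v\<in>R. U u v * g v))"
    by (simp only: of_real_sum complex_norm_square)
  also have "\<dots> = (\<Sum>u\<in>R. \<Sum>v'\<in>R. \<Sum>v\<in>R. cnj (g v) * g v' * (cnj (U u v) * U u v'))"
  proof (intro sum.cong refl)
    fix u
    show "(\<Sum>v'\<in>R. U u v' * g v') * cnj (\<Sum>v\<in>R. U u v * g v) =
        (\<Sum>v'\<in>R. \<Sum>v\<in>R. cnj (g v) * g v' * (cnj (U u v) * U u v'))"
      unfolding cnj_sum sum_distrib_right sum_distrib_left by (subst sum.swap) (simp add: mult_ac)
  qed
  also have "\<dots> = (\<Sum>v'\<in>R. \<Sum>v\<in>R. \<Sum>u\<in>R. cnj (g v) * g v' * (cnj (U u v) * U u v'))"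
    by (subst sum.swap) (rule sum.cong[OF refl sum.swap])
  also have "\<dots> = (\<Sum>v'\<in>R. \<Sum>v\<in>R. cnj (g v) * g v' * (\<Sum>u\<in>R. cnj (U u v) * U u v'))"
    by (simp only: sum_distrib_left)
  also have "\<dots> = (\<Sum>v'\<in>R. \<Sum>v\<in>R. if v = v' then cnj (g v) * g v' else 0)"
    using un by (intro sum.cong refl) auto
  also have "\<dots> = (\<Sum>v'\<in>R. cnj (g v') * g v')"
    using fin by (intro sum.cong refl) (simp add: sum.delta)
  also have "\<dots> = complex_of_real (\<Sum>v\<in>R. (cmod (g v))\<^sup>2)"
    by (simp only: of_real_sum complex_norm_square mult.commute)
  finally show ?thesis using of_real_eq_iff by blast
qed

lemma apply_op_norm:
  assumes U: "local_unitary m S U"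
  shows "(\<Sum>z\<in>qbasis m. (cmod (apply_op m S U \<psi> z))\<^sup>2) = (\<Sum>z\<in>qbasis m. (cmod (\<psi> z))\<^sup>2)"
proof -
  have un: "\<forall>v\<in>local_basis m S. \<forall>v'\<in>local_basis m S. (\<Sum>u\<in>local_basis m S. cnj (U u v) * U u v') = (if v = v' then 1 else 0)"
    using U by (simp add: local_unitary_def local_basis_def)
  have "(\<Sum>z\<in>qbasis m. (cmod (apply_op m S U \<psi> z))\<^sup>2) =
     (\<Sum>c\<in>local_basis m (-S). \<Sum>u\<in>local_basis m S. (cmod (apply_op m S U \<psi> (overwrite S c u)))\<^sup>2)"
    by (rule sum_qbasis_split)
  also have "\<dots> = (\<Sum>c\<in>local_basis m (-S). \<Sum>u\<in>local_basis m S. (cmod (\<Sum>v\<in>local_basis m S. U u v * \<psi> (overwrite S c v)))\<^sup>2)"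
  proof (intro sum.cong refl)
    fix c u assume c: "c \<in> local_basis m (-S)" and u: "u \<in> local_basis m S"
    have cq: "c \<in> qbasis m" using c local_basis_subset by auto
    have "restr S (overwrite S c u) = u" using u cq by (auto simp: local_basis_iff qbasis_def list_eq_iff_nth_eq)
    moreover have "overwrite S (overwrite S c u) v = overwrite S c v" for v
      using cq by (auto simp: qbasis_def list_eq_iff_nth_eq)
    ultimately show "(cmod (apply_op m S U \<psi> (overwrite S c u)))\<^sup>2 = (cmod (\<Sum>v\<in>local_basis m S. U u v * \<psi> (overwrite S c v)))\<^sup>2"
      using apply_op_overwrite[OF overwrite_in_qbasis[OF cq]] by simp
  qed
  also have "\<dots> = (\<Sum>c\<in>local_basis m (-S). \<Sum>v\<in>local_basis m S. (cmod (\<psi> (overwrite S c v)))\<^sup>2)"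
    by (intro sum.cong refl sum_norm_unitary[OF finite_local_basis un])
  also have "\<dots> = (\<Sum>z\<in>qbasis m. (cmod (\<psi> z))\<^sup>2)"
    by (rule sum_qbasis_split[symmetric])
  finally show ?thesis .
qed

text \<open>After j rounds the state is a sum over j-bit strings t of products of a vector A t on the
  qubits OA held by Alice and a vector B t on Bob's qubits, each of norm at most 1.\<close>

definition product_decomp :: "nat \<Rightarrow> nat set \<Rightarrow> nat \<Rightarrow> qst \<Rightarrow> (bool list \<Rightarrow> qst) \<Rightarrow> (bool list \<Rightarrow> qst) \<Rightarrow> bool" where
  "product_decomp m OA j \<psi> A B \<longleftrightarrow> (\<forall>z\<in>qbasis m. \<psi> z = (\<Sum>t\<in>inputs j. A t z * B t z)) \<and>
     (\<forall>t. depends_on m OA (A t)) \<and> (\<forall>t. depends_on m (-OA) (B t)) \<and>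
     (\<forall>t\<in>inputs j. local_norm m OA (A t) \<le> 1) \<and> (\<forall>t\<in>inputs j. local_norm m (-OA) (B t) \<le> 1)"

definition local_apply :: "nat \<Rightarrow> nat set \<Rightarrow> qop \<Rightarrow> qst \<Rightarrow> qst" where
  "local_apply m S U g = (\<lambda>z. \<Sum>v\<in>local_basis m S. U (restr S z) v * g v)"

lemma apply_op_product:
  assumes G: "\<forall>t. depends_on m S (G t)" and H: "\<forall>t. depends_on m (-S) (H t)"
    and psi: "\<forall>z\<in>qbasis m. \<psi> z = (\<Sum>t\<in>I. G t z * H t z)" and z: "z \<in> qbasis m"
  shows "apply_op m S U \<psi> z = (\<Sum>t\<in>I. local_apply m S U (G t) z * H t z)"
proof -
  have "apply_op m S U \<psi> z = (\<Sum>v\<in>local_basis m S. U (restr S z) v * \<psi> (overwrite S z v))"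
    by (rule apply_op_overwrite[OF z])
  also have "\<dots> = (\<Sum>v\<in>local_basis m S. U (restr S z) v * (\<Sum>t\<in>I. G t v * H t z))"
    using psi overwrite_in_qbasis[OF z] depends_on_overwrite_in[OF spec[OF G] z]
      depends_on_overwrite_out[OF spec[OF H] z] by (intro sum.cong refl) simp
  also have "\<dots> = (\<Sum>t\<in>I. \<Sum>v\<in>local_basis m S. U (restr S z) v * G t v * H t z)"
    by (subst sum.swap) (simp only: sum_distrib_left mult.assoc)
  also have "\<dots> = (\<Sum>t\<in>I. local_apply m S U (G t) z * H t z)"
    unfolding local_apply_def by (simp only: sum_distrib_right)
  finally show ?thesis .
qed

lemma depends_on_local_apply: "depends_on m S (local_apply m S U g)"
  unfolding depends_on_def local_apply_def
proof (intro ballI impI)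
  fix z w assume "z \<in> qbasis m" "w \<in> qbasis m" "\<forall>i<m. i \<in> S \<longrightarrow> z ! i = w ! i"
  then have "restr S z = restr S w" by (auto simp: qbasis_def list_eq_iff_nth_eq)
  then show "(\<Sum>v\<in>local_basis m S. U (restr S z) v * g v) = (\<Sum>v\<in>local_basis m S. U (restr S w) v * g v)" by simp
qed

lemma local_norm_local_apply:
  assumes "local_unitary m S U"
  shows "local_norm m S (local_apply m S U g) = local_norm m S g"
proof -
  have "local_norm m S (local_apply m S U g) = (\<Sum>u\<in>local_basis m S. (cmod (\<Sum>v\<in>local_basis m S. U u v * g v))\<^sup>2)"
    unfolding local_norm_def local_apply_def by (intro sum.cong refl) (simp add: restr_local_basis)
  also have "\<dots> = local_norm m S g"
    unfolding local_norm_def using assms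
    by (intro sum_norm_unitary[OF finite_local_basis]) (simp add: local_unitary_def local_basis_def)
  finally show ?thesis .
qed

lemma local_norm_update_le:
  assumes q: "q \<in> S" "q < m"
  shows "local_norm m (S - {q}) (\<lambda>z. g (z[q := b])) \<le> local_norm m S g"
proof -
  let ?f = "\<lambda>v. v[q := b]"
  have inj: "inj_on ?f (local_basis m (S - {q}))"
  proof (rule inj_onI)
    fix v v' assume v: "v \<in> local_basis m (S - {q})" "v' \<in> local_basis m (S - {q})" "v[q := b] = v'[q := b]"
    then have "\<not> v!q" "\<not> v'!q" using q by (auto simp: local_basis_iff)
    then show "v = v'" using v(3) v(1,2) q
      by (auto simp: local_basis_iff list_eq_iff_nth_eq nth_list_update split: if_splits)
  qed
  have sub: "?f ` local_basis m (S - {q}) \<subseteq> local_basis m S" using q by (auto simp: local_basis_iff nth_list_update)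
  have "local_norm m (S - {q}) (\<lambda>z. g (z[q := b])) = (\<Sum>u\<in>?f ` local_basis m (S - {q}). (cmod (g u))\<^sup>2)"
    unfolding local_norm_def by (simp add: sum.reindex[OF inj])
  also have "\<dots> \<le> (\<Sum>u\<in>local_basis m S. (cmod (g u))\<^sup>2)"
    by (rule sum_mono2[OF finite_local_basis sub]) simp
  finally show ?thesis unfolding local_norm_def .
qed

lemma local_norm_filter_le:
  assumes q: "q \<in> S" "q < m" and H: "depends_on m (-S) h"
  shows "local_norm m (-(S - {q})) (\<lambda>z. if z!q = b then h z else 0) \<le> local_norm m (-S) h"
proof -
  let ?f = "\<lambda>v. v[q := False]"
  let ?D = "{v \<in> local_basis m (-(S - {q})). v!q = b}"
  have inj: "inj_on ?f ?D"
  proof (rule inj_onI)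
    fix v v' assume v: "v \<in> ?D" "v' \<in> ?D" "v[q := False] = v'[q := False]"
    then show "v = v'" using q
      by (auto simp: local_basis_iff list_eq_iff_nth_eq nth_list_update split: if_splits)
  qed
  have sub: "?f ` ?D \<subseteq> local_basis m (-S)" using q by (auto simp: local_basis_iff nth_list_update)
  have hq: "h v = h (v[q := False])" if "v \<in> local_basis m (-(S - {q}))" for v
  proof -
    have "v \<in> qbasis m" using that local_basis_subset by auto
    moreover have "v[q := False] \<in> qbasis m" using calculation by (simp add: qbasis_def)
    moreover have "\<forall>i<m. i \<in> -S \<longrightarrow> v ! i = v[q := False] ! i"
    proof (intro allI impI)
      fix i assume "i < m" "i \<in> -S"
      then have "i \<noteq> q" using q by auto
      then show "v ! i = v[q := False] ! i" by simp
    qed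
    ultimately show ?thesis using H unfolding depends_on_def by blast
  qed
  have "local_norm m (-(S - {q})) (\<lambda>z. if z!q = b then h z else 0) = (\<Sum>v\<in>?D. (cmod (h v))\<^sup>2)"
  proof -
    have "local_norm m (-(S - {q})) (\<lambda>z. if z!q = b then h z else 0) =
        (\<Sum>v\<in>local_basis m (-(S - {q})). if v!q = b then (cmod (h v))\<^sup>2 else 0)"
      unfolding local_norm_def by (intro sum.cong refl) auto
    also have "\<dots> = (\<Sum>v\<in>?D. (cmod (h v))\<^sup>2)" by (simp add: sum.inter_filter finite_local_basis)
    finally show ?thesis .
  qed
  also have "\<dots> = (\<Sum>v\<in>?D. (cmod (h (v[q := False])))\<^sup>2)"
    using hq by (intro sum.cong refl) auto
  also have "\<dots> = (\<Sum>u\<in>?f ` ?D. (cmod (h u))\<^sup>2)"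
    by (subst sum.reindex[OF inj]) (simp add: comp_def)
  also have "\<dots> \<le> (\<Sum>u\<in>local_basis m (-S). (cmod (h u))\<^sup>2)"
    by (rule sum_mono2[OF finite_local_basis sub]) simp
  finally show ?thesis unfolding local_norm_def .
qed

lemma sum_split_qubit:
  fixes G H :: "bool list \<Rightarrow> qst"
  shows "(\<Sum>s\<in>inputs (Suc j). G (tl s) (z[q := hd s]) * (if z ! q = hd s then H (tl s) z else 0)) =
   (\<Sum>t\<in>inputs j. G t z * H t z)"
  unfolding sum_inputs_Suc using list_update_id[of z q] by (intro sum.cong refl) (cases "z ! q"; simp)

lemma depends_on_update:
  assumes "depends_on m S g" "q < m"
  shows "depends_on m (S - {q}) (\<lambda>z. g (z[q := b]))"
  using assms unfolding depends_on_def by (auto simp: qbasis_def nth_list_update)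

lemma depends_on_filter:
  assumes h: "depends_on m (-S) h" and q: "q \<in> S" "q < m"
  shows "depends_on m (-(S - {q})) (\<lambda>z. if z ! q = b then h z else 0)"
  unfolding depends_on_def
proof (intro ballI impI)
  fix z w assume zw: "z \<in> qbasis m" "w \<in> qbasis m" "\<forall>i<m. i \<in> -(S - {q}) \<longrightarrow> z ! i = w ! i"
  then have "z ! q = w ! q" using q by blast
  moreover have "h z = h w" using h zw unfolding depends_on_def by blast
  ultimately show "(if z ! q = b then h z else 0) = (if w ! q = b then h w else 0)" by simp
qed

text \<open>Splitting each
  term by the value b of q moves q from the speaker's factor to the listener's and doubles the
  number of terms.\<close>

lemma product_decomp_round:
  assumes U: "local_unitary m S U" and q: "q \<in> S" "q < m" and D: "product_decomp m S j \<psi> A B"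
  shows "product_decomp m (S - {q}) (Suc j) (apply_op m S U \<psi>)
    (\<lambda>s z. local_apply m S U (A (tl s)) (z[q := hd s])) (\<lambda>s z. if z ! q = hd s then B (tl s) z else 0)"
  unfolding product_decomp_def
proof (intro conjI ballI allI)
  have psi: "\<forall>z\<in>qbasis m. \<psi> z = (\<Sum>t\<in>inputs j. A t z * B t z)" and dA: "\<forall>t. depends_on m S (A t)"
    using D by (simp_all add: product_decomp_def)
  have dB: "\<forall>t. depends_on m (-S) (B t)" and nA: "\<forall>t\<in>inputs j. local_norm m S (A t) \<le> 1"
    and nB: "\<forall>t\<in>inputs j. local_norm m (-S) (B t) \<le> 1"
    using D by (simp_all add: product_decomp_def)
  fix z assume "z \<in> qbasis m"
  then show "apply_op m S U \<psi> z = (\<Sum>s\<in>inputs (Suc j).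
      local_apply m S U (A (tl s)) (z[q := hd s]) * (if z ! q = hd s then B (tl s) z else 0))"
    unfolding sum_split_qubit[where G="\<lambda>t. local_apply m S U (A t)" and H=B] by (rule apply_op_product[OF dA dB psi])
next
  fix s
  show "depends_on m (S - {q}) (\<lambda>z. local_apply m S U (A (tl s)) (z[q := hd s]))"
    using depends_on_local_apply q(2) by (rule depends_on_update)
  show "depends_on m (-(S - {q})) (\<lambda>z. if z ! q = hd s then B (tl s) z else 0)"
    using D q by (intro depends_on_filter) (simp_all add: product_decomp_def)
next
  fix s assume "s \<in> inputs (Suc j)"
  then have "local_norm m S (A (tl s)) \<le> 1" "local_norm m (-S) (B (tl s)) \<le> 1"
    using D tl_in_inputs by (simp_all add: product_decomp_def)
  then show "local_norm m (S - {q}) (\<lambda>z. local_apply m S U (A (tl s)) (z[q := hd s])) \<le> 1"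
    and "local_norm m (-(S - {q})) (\<lambda>z. if z ! q = hd s then B (tl s) z else 0) \<le> 1"
    using local_norm_update_le[OF q, of "local_apply m S U (A (tl s))" "hd s"] local_norm_local_apply[OF U]
      local_norm_filter_le[OF q, of "B (tl s)" "hd s"] D by (simp_all add: product_decomp_def)
qed

lemma product_decomp_swap:
  assumes "product_decomp m S j \<psi> A B"
  shows "product_decomp m ({0..<m} - S) j \<psi> B A"
proof -
  have norm: "local_norm m ({0..<m} - S) g = local_norm m (-S) g" "local_norm m (-({0..<m} - S)) g = local_norm m S g"
    for g by (auto intro: local_norm_cong)
  have dep: "depends_on m ({0..<m} - S) g" if "depends_on m (-S) g" for g :: qst
    using that by (rule depends_on_mono) auto
  have dep': "depends_on m (-({0..<m} - S)) g" if "depends_on m S g" for g :: qst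
    using that by (rule depends_on_mono) auto
  show ?thesis using assms dep dep' unfolding product_decomp_def norm by (simp add: mult.commute)
qed

lemma product_decomp_qfinal:
  "qvalid m rs OA \<Longrightarrow> OA \<subseteq> {0..<m} \<Longrightarrow> (\<forall>x\<in>X. \<forall>y\<in>Y. product_decomp m OA j (\<Psi> x y) (Af x) (Bf y)) \<Longrightarrow>
   \<exists>OA' Af' Bf'. OA' \<subseteq> {0..<m} \<and>
     (\<forall>x\<in>X. \<forall>y\<in>Y. product_decomp m OA' (j + length rs) (qfinal m rs OA (\<Psi> x y)) (Af' x) (Bf' y))"
proof (induction rs arbitrary: OA j \<Psi> Af Bf)
  case Nil
  then show ?case by auto
next
  case (Cons r rs)
  obtain a U q where r: "r = (a, U, q)" by (cases r) auto
  show ?case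
  proof (cases a)
    case True
    then have v: "local_unitary m OA U" "q \<in> OA" "qvalid m rs (OA - {q})" and "q < m"
      using Cons.prems(1,2) r by (auto simp: Let_def)
    then have "\<forall>x\<in>X. \<forall>y\<in>Y. product_decomp m (OA - {q}) (Suc j) (apply_op m OA U (\<Psi> x y))
        ((\<lambda>x s z. local_apply m OA U (Af x (tl s)) (z[q := hd s])) x)
        ((\<lambda>y s z. if z ! q = hd s then Bf y (tl s) z else 0) y)"
      using product_decomp_round Cons.prems(3) by blast
    from Cons.IH[OF v(3) _ this] Cons.prems(2) show ?thesis using r True by (auto simp: Let_def)
  next
    case False
    let ?S = "{0..<m} - OA"
    have v: "local_unitary m ?S U" "q \<in> ?S" "qvalid m rs (insert q OA)"
      using Cons.prems(1) r False by (simp_all add: Let_def)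
    have OA': "{0..<m} - (?S - {q}) = insert q OA" "insert q OA \<subseteq> {0..<m}" using v(2) Cons.prems(2) by auto
    have "\<forall>x\<in>X. \<forall>y\<in>Y. product_decomp m (insert q OA) (Suc j) (apply_op m ?S U (\<Psi> x y))
        ((\<lambda>x s z. if z ! q = hd s then Af x (tl s) z else 0) x)
        ((\<lambda>y s z. local_apply m ?S U (Bf y (tl s)) (z[q := hd s])) y)"
    proof (intro ballI)
      fix x y assume "x \<in> X" "y \<in> Y"
      then have "product_decomp m ?S j (\<Psi> x y) (Bf y) (Af x)"
        using Cons.prems(3) product_decomp_swap by blast
      then show "product_decomp m (insert q OA) (Suc j) (apply_op m ?S U (\<Psi> x y))
          (\<lambda>s z. if z ! q = hd s then Af x (tl s) z else 0) (\<lambda>s z. local_apply m ?S U (Bf y (tl s)) (z[q := hd s]))"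
        using product_decomp_swap[OF product_decomp_round[OF v(1,2)]] v(2) OA'(1) by simp
    qed
    from Cons.IH[OF v(3) OA'(2) this] show ?thesis using r False by (auto simp: Let_def)
  qed
qed

lemma qfinal_norm:
  "qvalid m rs OA \<Longrightarrow> (\<Sum>z\<in>qbasis m. (cmod (qfinal m rs OA \<psi> z))\<^sup>2) = (\<Sum>z\<in>qbasis m. (cmod (\<psi> z))\<^sup>2)"
proof (induction rs arbitrary: OA \<psi>)
  case Nil
  then show ?case by simp
next
  case (Cons r rs)
  obtain a U q where r: "r = (a, U, q)" by (cases r) auto
  let ?S = "if a then OA else {0..<m} - OA"
  let ?OA = "if a then OA - {q} else insert q OA"
  have v: "local_unitary m ?S U" "qvalid m rs ?OA" using Cons.prems r by (simp_all add: Let_def)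
  have "(\<Sum>z\<in>qbasis m. (cmod (qfinal m (r # rs) OA \<psi> z))\<^sup>2) =
      (\<Sum>z\<in>qbasis m. (cmod (qfinal m rs ?OA (apply_op m ?S U \<psi>) z))\<^sup>2)"
    using r by (simp add: Let_def)
  also have "\<dots> = (\<Sum>z\<in>qbasis m. (cmod (apply_op m ?S U \<psi> z))\<^sup>2)" by (rule Cons.IH[OF v(2)])
  also have "\<dots> = (\<Sum>z\<in>qbasis m. (cmod (\<psi> z))\<^sup>2)" by (rule apply_op_norm[OF v(1)])
  finally show ?case .
qed

lemma depends_on_mult: "depends_on m S g1 \<Longrightarrow> depends_on m S g2 \<Longrightarrow> depends_on m S (\<lambda>z. g1 z * g2 z)"
  unfolding depends_on_def by metis

lemma depends_on_cnj: "depends_on m S g \<Longrightarrow> depends_on m S (\<lambda>z. cnj (g z))"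
  unfolding depends_on_def by metis

lemma depends_on_nth: fixes F :: "bool \<Rightarrow> 'a" assumes "q < m" "q \<in> S" shows "depends_on m S (\<lambda>z. F (z!q))"
  unfolding depends_on_def
proof (intro ballI impI)
  fix z w :: "bool list" assume "\<forall>i<m. i \<in> S \<longrightarrow> z!i = w!i"
  then have "z!q = w!q" using assms by blast
  then show "F (z!q) = F (w!q)" by simp
qed

lemma depends_on_const: "depends_on m S (\<lambda>z. c)"
  unfolding depends_on_def by simp

definition gram :: "nat \<Rightarrow> nat set \<Rightarrow> qst \<Rightarrow> (bool list \<Rightarrow> qst) \<Rightarrow> bool list \<Rightarrow> bool list \<Rightarrow> complex" where
  "gram m S s A t t' = (\<Sum>u\<in>local_basis m S. s u * A t u * cnj (A t' u))"

lemma cmod_gram_le: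
  assumes "\<forall>u. cmod (s u) \<le> 1" "local_norm m S (A t) \<le> 1" "local_norm m S (A t') \<le> 1"
  shows "cmod (gram m S s A t t') \<le> 1"
proof -
  have "cmod (gram m S s A t t') \<le> (\<Sum>u\<in>local_basis m S. cmod (s u * A t u * cnj (A t' u)))"
    unfolding gram_def by (rule norm_sum)
  also have "\<dots> \<le> (\<Sum>u\<in>local_basis m S. ((cmod (A t u))\<^sup>2 + (cmod (A t' u))\<^sup>2) / 2)"
  proof (rule sum_mono)
    fix u
    have "cmod (s u * A t u * cnj (A t' u)) \<le> cmod (A t u) * cmod (A t' u)"
      using assms(1) mult_right_mono[of "cmod (s u)" 1 "cmod (A t u) * cmod (A t' u)"]
      by (simp add: norm_mult mult.assoc)
    also have "\<dots> \<le> ((cmod (A t u))\<^sup>2 + (cmod (A t' u))\<^sup>2) / 2"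
      using sum_squares_ge_zero[of "cmod (A t u) - cmod (A t' u)" 0] by (simp add: power2_eq_square algebra_simps)
    finally show "cmod (s u * A t u * cnj (A t' u)) \<le> ((cmod (A t u))\<^sup>2 + (cmod (A t' u))\<^sup>2) / 2" .
  qed
  also have "\<dots> = (local_norm m S (A t) + local_norm m S (A t')) / 2"
    unfolding local_norm_def by (simp only: sum_divide_distrib[symmetric] sum.distrib)
  also have "\<dots> \<le> 1" using assms(2,3) by simp
  finally show ?thesis .
qed

lemma indicator_sum_le:
  assumes "\<And>v. v \<in> R \<Longrightarrow> C v \<Longrightarrow> v = w" "finite R"
  shows "(\<Sum>v\<in>R. (cmod (if C v then 1 else 0))\<^sup>2) \<le> 1"
proof -
  have "(\<Sum>v\<in>R. (cmod (if C v then 1 else 0))\<^sup>2) \<le> (\<Sum>v\<in>R. if v = w then 1 else 0)"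
    using assms(1) by (intro sum_mono) auto
  also have "\<dots> \<le> 1" using assms(2) by (simp add: sum.delta)
  finally show ?thesis .
qed

definition alice_init :: "nat \<Rightarrow> nat set \<Rightarrow> bool list \<Rightarrow> bool list \<Rightarrow> qst" where
  "alice_init m OA x t z = (if \<forall>i<m. i \<in> OA \<longrightarrow> z ! i = (i < length x \<and> x ! i) then 1 else 0)"

definition bob_init :: "nat \<Rightarrow> nat set \<Rightarrow> nat \<Rightarrow> bool list \<Rightarrow> bool list \<Rightarrow> qst" where
  "bob_init m OA n y t z = (if \<forall>i<m. i \<notin> OA \<longrightarrow> z ! i = (n \<le> i \<and> i - n < length y \<and> y ! (i - n)) then 1 else 0)"

lemma product_decomp_qinit:
  assumes mn: "2 * n \<le> m" and OA: "{0..<n} \<subseteq> OA" "OA \<inter> {n..<2*n} = {}"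
    and xy: "x \<in> inputs n" "y \<in> inputs n"
  shows "product_decomp m OA 0 (qinit m x y) (alice_init m OA x) (bob_init m OA n y)"
proof -
  have lx: "length x = n" and ly: "length y = n" using xy by (auto simp: inputs_def)
  define w where "w = x @ y @ replicate (m - n - n) False"
  have lw: "length w = m" using lx ly mn by (simp add: w_def)
  have w_alice: "w ! i = (i < n \<and> x ! i)" if "i < m" "i \<in> OA" for i
  proof -
    have "i < n \<or> 2 * n \<le> i" using OA(2) that(2) by force
    then show ?thesis using lx ly that(1) by (auto simp: w_def nth_append)
  qed
  have w_bob: "w ! i = (n \<le> i \<and> i - n < n \<and> y ! (i - n))" if "i < m" "i \<notin> OA" for i
  proof -
    have "n \<le> i" using OA(1) that(2) by (meson atLeastLessThan_iff le0 not_le subsetD)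
    then show ?thesis using lx ly that(1) by (auto simp: w_def nth_append)
  qed
  have "qinit m x y z = alice_init m OA x t z * bob_init m OA n y t z" if "z \<in> qbasis m" for z t
  proof -
    have "z = w \<longleftrightarrow> (\<forall>i<m. z ! i = w ! i)" using that lw by (simp add: qbasis_def list_eq_iff_nth_eq)
    also have "\<dots> \<longleftrightarrow> (\<forall>i<m. (i \<in> OA \<longrightarrow> z ! i = (i < n \<and> x ! i)) \<and>
        (i \<notin> OA \<longrightarrow> z ! i = (n \<le> i \<and> i - n < n \<and> y ! (i - n))))"
    proof -
      have "z ! i = w ! i \<longleftrightarrow> (i \<in> OA \<longrightarrow> z ! i = (i < n \<and> x ! i)) \<and>
          (i \<notin> OA \<longrightarrow> z ! i = (n \<le> i \<and> i - n < n \<and> y ! (i - n)))" if "i < m" for i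
        using w_alice[OF that] w_bob[OF that] by (cases "i \<in> OA") auto
      then show ?thesis by blast
    qed
    also have "\<dots> \<longleftrightarrow> (\<forall>i<m. i \<in> OA \<longrightarrow> z ! i = (i < n \<and> x ! i)) \<and>
        (\<forall>i<m. i \<notin> OA \<longrightarrow> z ! i = (n \<le> i \<and> i - n < n \<and> y ! (i - n)))"
      by blast
    finally have key: "z = w \<longleftrightarrow> (\<forall>i<m. i \<in> OA \<longrightarrow> z ! i = (i < n \<and> x ! i)) \<and>
        (\<forall>i<m. i \<notin> OA \<longrightarrow> z ! i = (n \<le> i \<and> i - n < n \<and> y ! (i - n)))" .
    have "qinit m x y z = (if z = w then 1 else 0)" by (simp add: qinit_def w_def lx ly)
    then show ?thesis unfolding key alice_init_def bob_init_def lx ly by auto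
  qed
  moreover have "local_norm m OA (alice_init m OA x t) \<le> 1" for t
    unfolding local_norm_def alice_init_def
    by (rule indicator_sum_le[OF _ finite_local_basis, where w="map (\<lambda>i. i \<in> OA \<and> i < n \<and> x ! i) [0..<m]"])
      (auto simp: local_basis_iff list_eq_iff_nth_eq lx)
  moreover have "local_norm m (-OA) (bob_init m OA n y t) \<le> 1" for t
    unfolding local_norm_def bob_init_def
    by (rule indicator_sum_le[OF _ finite_local_basis,
          where w="map (\<lambda>i. i \<notin> OA \<and> n \<le> i \<and> i - n < n \<and> y ! (i - n)) [0..<m]"])
      (auto simp: local_basis_iff list_eq_iff_nth_eq ly)
  ultimately show ?thesis
    by (auto simp: product_decomp_def depends_on_def alice_init_def bob_init_def inputs_def)
qed

lemma qinit_norm: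
  assumes "2*n \<le> m" "x \<in> inputs n" "y \<in> inputs n"
  shows "(\<Sum>z\<in>qbasis m. (cmod (qinit m x y z))\<^sup>2) = 1"
proof -
  define w where "w = x @ y @ replicate (m - length x - length y) False"
  have "w \<in> qbasis m" using assms by (auto simp: w_def qbasis_def inputs_def)
  moreover have "(\<Sum>z\<in>qbasis m. (cmod (qinit m x y z))\<^sup>2) = (\<Sum>z\<in>qbasis m. if z = w then 1 else 0)"
    by (intro sum.cong refl) (simp add: qinit_def w_def)
  ultimately show ?thesis by (simp add: sum.delta finite_qbasis)
qed

definition side_sign :: "nat \<Rightarrow> nat set \<Rightarrow> qst" where
  "side_sign q S z = (if q \<in> S then complex_of_real (bsign (z ! q)) else 1)"

lemma side_sign_product: "side_sign q S z * side_sign q (-S) z = complex_of_real (bsign (z ! q))"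
  by (simp add: side_sign_def)

lemma cmod_side_sign: "cmod (side_sign q S z) \<le> 1"
  by (simp add: side_sign_def bsign_def)

lemma depends_on_side_sign: "q < m \<Longrightarrow> depends_on m S (side_sign q S)"
  using depends_on_nth[of q m S "\<lambda>b. complex_of_real (bsign b)"]
  unfolding side_sign_def by (cases "q \<in> S") (simp_all add: depends_on_const)

lemma measurement_bias_bilinear:
  assumes D: "product_decomp m S r \<psi> A B" and q: "q < m"
  shows "complex_of_real (\<Sum>z\<in>qbasis m. bsign (z ! q) * (cmod (\<psi> z))\<^sup>2) =
    (\<Sum>t\<in>inputs r. \<Sum>t'\<in>inputs r. gram m S (side_sign q S) A t t' * gram m (-S) (side_sign q (-S)) B t t')"
proof -
  let ?sA = "side_sign q S" and ?sB = "side_sign q (-S)"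
  have psi: "\<forall>z\<in>qbasis m. \<psi> z = (\<Sum>t\<in>inputs r. A t z * B t z)"
    and dA: "\<forall>t. depends_on m S (A t)" and dB: "\<forall>t. depends_on m (-S) (B t)"
    using D by (auto simp: product_decomp_def)
  have "complex_of_real (\<Sum>z\<in>qbasis m. bsign (z ! q) * (cmod (\<psi> z))\<^sup>2) =
      (\<Sum>z\<in>qbasis m. ?sA z * ?sB z * (\<psi> z * cnj (\<psi> z)))"
    unfolding of_real_sum of_real_mult complex_norm_square side_sign_product ..
  also have "\<dots> = (\<Sum>z\<in>qbasis m. \<Sum>t\<in>inputs r. \<Sum>t'\<in>inputs r.
      (?sA z * A t z * cnj (A t' z)) * (?sB z * B t z * cnj (B t' z)))"
  proof (rule sum.cong[OF refl])
    fix z assume z: "z \<in> qbasis m"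
    show "?sA z * ?sB z * (\<psi> z * cnj (\<psi> z)) = (\<Sum>t\<in>inputs r. \<Sum>t'\<in>inputs r.
        (?sA z * A t z * cnj (A t' z)) * (?sB z * B t z * cnj (B t' z)))"
      unfolding psi[rule_format, OF z] cnj_sum sum_distrib_left sum_distrib_right
      by (subst sum.swap) (simp add: mult_ac)
  qed
  also have "\<dots> = (\<Sum>t\<in>inputs r. \<Sum>t'\<in>inputs r. \<Sum>z\<in>qbasis m.
      (?sA z * A t z * cnj (A t' z)) * (?sB z * B t z * cnj (B t' z)))"
    by (subst sum.swap) (rule sum.cong[OF refl], rule sum.swap)
  also have "\<dots> = (\<Sum>t\<in>inputs r. \<Sum>t'\<in>inputs r. gram m S ?sA A t t' * gram m (-S) ?sB B t t')"
    unfolding gram_def using dA dB depends_on_side_sign[OF q]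
    by (intro sum.cong refl sum_qbasis_product depends_on_mult depends_on_cnj) auto
  finally show ?thesis .
qed

text \<open>Re (\<alpha> * \<beta>) = Re \<alpha> * Re \<beta> - Im \<alpha> * Im \<beta>: the leading bit of the index selects
  the real or the imaginary part, the remaining 2r bits the pair t, t'.\<close>

lemma sign_rep_of_bilinear:
  fixes \<alpha> \<beta> :: "bool list \<Rightarrow> bool list \<Rightarrow> bool list \<Rightarrow> complex"
  assumes "0 < \<delta>"
    and \<alpha>: "\<forall>x\<in>inputs n. \<forall>t\<in>inputs r. \<forall>t'\<in>inputs r. cmod (\<alpha> x t t') \<le> 1"
    and \<beta>: "\<forall>y\<in>inputs n. \<forall>t\<in>inputs r. \<forall>t'\<in>inputs r. cmod (\<beta> y t t') \<le> 1"
    and margin: "\<forall>x\<in>inputs n. \<forall>y\<in>inputs n.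
      2 * \<delta> \<le> bsign (f x y) * Re (\<Sum>t\<in>inputs r. \<Sum>t'\<in>inputs r. \<alpha> x t t' * \<beta> y t t')"
  shows "sign_rep n f (2 * r + 1) (\<delta> / 4 ^ r)"
proof -
  define a where "a s x = (let t = take r (tl s); t' = drop r (tl s) in
      if hd s then Re (\<alpha> x t t') else - Im (\<alpha> x t t'))" for s x
  define b where "b s y = (let t = take r (tl s); t' = drop r (tl s) in
      if hd s then Re (\<beta> y t t') else Im (\<beta> y t t'))" for s y
  have "(\<Sum>s\<in>inputs (2 * r + 1). a s x * b s y) = Re (\<Sum>t\<in>inputs r. \<Sum>t'\<in>inputs r. \<alpha> x t t' * \<beta> y t t')"
    for x y
  proof -
    have "(\<Sum>s\<in>inputs (2 * r + 1). a s x * b s y) =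
        (\<Sum>t\<in>inputs r. \<Sum>t'\<in>inputs r.
           a (True # t @ t') x * b (True # t @ t') y + a (False # t @ t') x * b (False # t @ t') y)"
      by (simp add: mult_2 sum_inputs_Suc sum_inputs_add)
    also have "\<dots> = (\<Sum>t\<in>inputs r. \<Sum>t'\<in>inputs r. Re (\<alpha> x t t' * \<beta> y t t'))"
      by (intro sum.cong refl) (auto simp: a_def b_def inputs_def)
    finally show ?thesis by (simp add: Re_sum)
  qed
  moreover have "\<bar>a s x\<bar> \<le> 1" "\<bar>b s y\<bar> \<le> 1"
    if "s \<in> inputs (2 * r + 1)" "x \<in> inputs n" "y \<in> inputs n" for s x y
  proof -
    define t t' where "t = take r (tl s)" and "t' = drop r (tl s)"
    have "t \<in> inputs r" "t' \<in> inputs r" using that(1) by (auto simp: inputs_def t_def t'_def)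
    then have "cmod (\<alpha> x t t') \<le> 1" "cmod (\<beta> y t t') \<le> 1" using that(2,3) \<alpha> \<beta> by blast+
    then show "\<bar>a s x\<bar> \<le> 1" "\<bar>b s y\<bar> \<le> 1"
      unfolding a_def b_def Let_def t_def[symmetric] t'_def[symmetric]
      using abs_Re_le_cmod[of "\<alpha> x t t'"] abs_Im_le_cmod[of "\<alpha> x t t'"]
        abs_Re_le_cmod[of "\<beta> y t t'"] abs_Im_le_cmod[of "\<beta> y t t'"] by auto
  qed
  moreover have "\<delta> / 4 ^ r * 2 ^ (2 * r + 1) = 2 * \<delta>"
    by (simp add: power_mult power_add)
  ultimately show ?thesis unfolding sign_rep_def using assms(1) margin
    by (intro conjI exI[of _ a] exI[of _ b]) auto
qed

lemma qerr_eq_bias: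
  assumes wf: "qwf P n" and xy: "x \<in> inputs n" "y \<in> inputs n"
  defines "\<psi> \<equiv> qfinal (qnum P) (qrounds P) (qalice P) (qinit (qnum P) x y)"
  shows "1 - 2 * qerr P f x y = bsign (f x y) * (\<Sum>z\<in>qbasis (qnum P). bsign (z ! qout P) * (cmod (\<psi> z))\<^sup>2)"
proof -
  have norm: "(\<Sum>z\<in>qbasis (qnum P). (cmod (\<psi> z))\<^sup>2) = 1"
    using wf qfinal_norm qinit_norm[OF _ xy] by (simp add: \<psi>_def qwf_def)
  have qerr: "qerr P f x y = (\<Sum>z\<in>qbasis (qnum P). if z ! qout P \<noteq> f x y then (cmod (\<psi> z))\<^sup>2 else 0)"
    unfolding qerr_def Let_def \<psi>_def by (simp add: sum.inter_filter finite_qbasis)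
  have "bsign (f x y) * (\<Sum>z\<in>qbasis (qnum P). bsign (z ! qout P) * (cmod (\<psi> z))\<^sup>2) =
      (\<Sum>z\<in>qbasis (qnum P). (cmod (\<psi> z))\<^sup>2) - 2 * qerr P f x y"
    unfolding qerr sum_distrib_left sum_subtractf[symmetric] by (intro sum.cong refl) (auto simp: bsign_def)
  then show ?thesis using norm by simp
qed

lemma qwf_product_decomp:
  assumes wf: "qwf P n"
  shows "\<exists>S A B. \<forall>x\<in>inputs n. \<forall>y\<in>inputs n. product_decomp (qnum P) S (length (qrounds P))
    (qfinal (qnum P) (qrounds P) (qalice P) (qinit (qnum P) x y)) (A x) (B y)"
proof -
  let ?m = "qnum P"
  have valid: "qvalid ?m (qrounds P) (qalice P)" and alice: "qalice P \<subseteq> {0..<?m}"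
    using wf by (simp_all add: qwf_def)
  have "\<forall>x\<in>inputs n. \<forall>y\<in>inputs n.
      product_decomp ?m (qalice P) 0 (qinit ?m x y) (alice_init ?m (qalice P) x) (bob_init ?m (qalice P) n y)"
    using wf by (simp add: qwf_def product_decomp_qinit)
  from product_decomp_qfinal[OF valid alice this] show ?thesis by auto
qed

lemma sign_rep_of_qprot:
  assumes "q_wue P n f"
  shows "sign_rep n f (2 * length (qrounds P) + 1) (qdelta P n f / 4 ^ length (qrounds P))"
proof -
  let ?m = "qnum P" and ?r = "length (qrounds P)" and ?q = "qout P"
  have wf: "qwf P n" and \<delta>: "0 < qdelta P n f" using assms by (simp_all add: q_wue_def)
  then have q: "?q < ?m" by (simp add: qwf_def)
  obtain S A B where D: "\<forall>x\<in>inputs n. \<forall>y\<in>inputs n.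
      product_decomp ?m S ?r (qfinal ?m (qrounds P) (qalice P) (qinit ?m x y)) (A x) (B y)"
    using qwf_product_decomp[OF wf] by blast
  define \<alpha> where "\<alpha> x = gram ?m S (side_sign ?q S) (A x)" for x
  define \<beta> where "\<beta> y = gram ?m (-S) (side_sign ?q (-S)) (B y)" for y
  obtain z0 where z0: "z0 \<in> inputs n" using inputs_nonempty by blast
  show ?thesis
  proof (rule sign_rep_of_bilinear[OF \<delta>])
    show "\<forall>x\<in>inputs n. \<forall>t\<in>inputs ?r. \<forall>t'\<in>inputs ?r. cmod (\<alpha> x t t') \<le> 1"
      using D z0 by (auto simp: \<alpha>_def product_decomp_def cmod_side_sign intro!: cmod_gram_le)
    show "\<forall>y\<in>inputs n. \<forall>t\<in>inputs ?r. \<forall>t'\<in>inputs ?r. cmod (\<beta> y t t') \<le> 1"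
      using D z0 by (auto simp: \<beta>_def product_decomp_def cmod_side_sign intro!: cmod_gram_le)
    show "\<forall>x\<in>inputs n. \<forall>y\<in>inputs n.
        2 * qdelta P n f \<le> bsign (f x y) * Re (\<Sum>t\<in>inputs ?r. \<Sum>t'\<in>inputs ?r. \<alpha> x t t' * \<beta> y t t')"
    proof (intro ballI)
      fix x y assume xy: "x \<in> inputs n" "y \<in> inputs n"
      have "qerr P f x y \<le> 1/2 - qdelta P n f" using xy qdelta_ge_iff[of "qdelta P n f" P n f] by blast
      moreover note qerr_eq_bias[OF wf xy, of f]
      moreover note arg_cong[where f=Re, OF measurement_bias_bilinear[OF D[rule_format, OF xy] q]]
      ultimately show "2 * qdelta P n f \<le>
          bsign (f x y) * Re (\<Sum>t\<in>inputs ?r. \<Sum>t'\<in>inputs ?r. \<alpha> x t t' * \<beta> y t t')"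
        by (simp add: \<alpha>_def \<beta>_def)
    qed
  qed
qed

section \<open>The rotation protocol\<close>

definition unitary2 :: "(bool \<Rightarrow> bool \<Rightarrow> complex) \<Rightarrow> bool" where
  "unitary2 g \<longleftrightarrow> (\<forall>b1 b2. (\<Sum>b\<in>UNIV. cnj (g b b1) * g b b2) = (if b1 = b2 then 1 else 0))"

text \<open>cgate m p g acts on qubit p by the 2x2 matrix g c, where the control c is the basis string
  of the other acting qubits (position p cleared).\<close>

definition cgate :: "nat \<Rightarrow> nat \<Rightarrow> (bool list \<Rightarrow> bool \<Rightarrow> bool \<Rightarrow> complex) \<Rightarrow> qop" where
  "cgate m p g = (\<lambda>u v. if u[p := False] = v[p := False] then g (v[p := False]) (u ! p) (v ! p) else 0)"

lemma list_eq_iff_update_eq: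
  "p < length v \<Longrightarrow> length v' = length v \<Longrightarrow> v = v' \<longleftrightarrow> v[p := b] = v'[p := b] \<and> v ! p = v' ! p"
  by (auto simp: list_eq_iff_nth_eq nth_list_update)

lemma sum_local_basis_update:
  assumes p: "p \<in> S" "p < m" and v: "v \<in> local_basis m S"
    and F: "\<And>u. u \<in> local_basis m S \<Longrightarrow> F u \<noteq> 0 \<Longrightarrow> u[p := False] = v[p := False]"
  shows "(\<Sum>u\<in>local_basis m S. F u) = (\<Sum>b\<in>UNIV. F (v[p := b]))"
proof -
  have lv: "length v = m" using v by (simp add: local_basis_iff)
  have sub: "range (\<lambda>b. v[p := b]) \<subseteq> local_basis m S" using v p by (auto simp: local_basis_iff nth_list_update)
  have "(\<Sum>u\<in>local_basis m S. F u) = (\<Sum>u\<in>range (\<lambda>b. v[p := b]). F u)"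
  proof (rule sum.mono_neutral_right[OF finite_local_basis sub], rule ballI, rule ccontr)
    fix u assume u: "u \<in> local_basis m S - range (\<lambda>b. v[p := b])" "F u \<noteq> 0"
    then have "u = v[p := u ! p]"
      using F[of u] list_eq_iff_update_eq[of p u "v[p := u ! p]" False] lv p
      by (auto simp: local_basis_iff)
    then show False using u(1) by blast
  qed
  also have "\<dots> = (\<Sum>b\<in>UNIV. F (v[p := b]))"
    using lv p by (subst sum.reindex) (auto simp: inj_on_def dest: arg_cong[where f="\<lambda>w. w ! p"])
  finally show ?thesis .
qed

lemma local_unitary_cgate:
  assumes p: "p \<in> S" "p < m" and g: "\<And>c. unitary2 (g c)"
  shows "local_unitary m S (cgate m p g)"
  unfolding local_unitary_def local_basis_def[symmetric]
proof (intro ballI)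
  fix v v' assume v: "v \<in> local_basis m S" and v': "v' \<in> local_basis m S"
  have lv: "length v = m" "length v' = m" using v v' by (auto simp: local_basis_iff)
  show "(\<Sum>u\<in>local_basis m S. cnj (cgate m p g u v) * cgate m p g u v') = (if v = v' then 1 else 0)"
  proof (cases "v[p := False] = v'[p := False]")
    case True
    have "(\<Sum>u\<in>local_basis m S. cnj (cgate m p g u v) * cgate m p g u v') =
        (\<Sum>b\<in>UNIV. cnj (g (v[p := False]) b (v ! p)) * g (v[p := False]) b (v' ! p))"
      using True lv p by (subst sum_local_basis_update[OF p v]) (auto simp: cgate_def split: if_splits)
    also have "\<dots> = (if v = v' then 1 else 0)"
      using g True list_eq_iff_update_eq[of p v v' False] lv p by (simp add: unitary2_def)
    finally show ?thesis .
  next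
    case False
    then have "cnj (cgate m p g u v) * cgate m p g u v' = 0" for u
      by (auto simp: cgate_def)
    then show ?thesis using False by (simp only: sum.neutral_const) auto
  qed
qed

lemma apply_op_cgate:
  assumes p: "p \<in> S" "p < m" and z: "z \<in> qbasis m"
  shows "apply_op m S (cgate m p g) \<psi> z = (\<Sum>b\<in>UNIV. g ((restr S z)[p := False]) (z ! p) b * \<psi> (z[p := b]))"
proof -
  let ?c = "restr S z"
  have lz: "length z = m" using z by (simp add: qbasis_def)
  have "apply_op m S (cgate m p g) \<psi> z = (\<Sum>v\<in>local_basis m S. cgate m p g ?c v * \<psi> (overwrite S z v))"
    by (rule apply_op_overwrite[OF z])
  also have "\<dots> = (\<Sum>b\<in>UNIV. cgate m p g ?c (?c[p := b]) * \<psi> (overwrite S z (?c[p := b])))"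
    by (rule sum_local_basis_update[OF p restr_in_local_basis[OF z]]) (auto simp: cgate_def split: if_splits)
  also have "\<dots> = (\<Sum>b\<in>UNIV. g (?c[p := False]) (z ! p) b * \<psi> (z[p := b]))"
  proof (rule sum.cong[OF refl])
    fix b
    have "overwrite S z (?c[p := b]) = z[p := b]" using p lz by (auto simp: list_eq_iff_nth_eq nth_list_update)
    then show "cgate m p g ?c (?c[p := b]) * \<psi> (overwrite S z (?c[p := b])) =
        g (?c[p := False]) (z ! p) b * \<psi> (z[p := b])"
      using p lz by (simp add: cgate_def)
  qed
  finally show ?thesis .
qed

fun alice_after :: "nat \<Rightarrow> (bool \<times> qop \<times> nat) list \<Rightarrow> nat set \<Rightarrow> nat set" where
  "alice_after m [] OA = OA"
| "alice_after m ((a, U, q) # rs) OA = alice_after m rs (if a then OA - {q} else insert q OA)"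

lemma qfinal_append: "qfinal m (rs1 @ rs2) OA \<psi> = qfinal m rs2 (alice_after m rs1 OA) (qfinal m rs1 OA \<psi>)"
  by (induction m rs1 OA \<psi> rule: qfinal.induct) (auto simp: Let_def)

lemma qvalid_append: "qvalid m (rs1 @ rs2) OA \<longleftrightarrow> qvalid m rs1 OA \<and> qvalid m rs2 (alice_after m rs1 OA)"
  by (induction m rs1 OA rule: qvalid.induct) (auto simp: Let_def)

lemma alice_after_append: "alice_after m (rs1 @ rs2) OA = alice_after m rs2 (alice_after m rs1 OA)"
  by (induction m rs1 OA rule: alice_after.induct) auto

lemma qvalid_single:
  "qvalid m [(a, U, q)] OA \<longleftrightarrow>
   local_unitary m (if a then OA else {0..<m} - OA) U \<and> q \<in> (if a then OA else {0..<m} - OA)"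
  by (simp add: Let_def)

definition hadamard :: "bool \<Rightarrow> bool \<Rightarrow> complex" where
  "hadamard b1 b2 = complex_of_real ((if b1 \<and> b2 then -1 else 1) / sqrt 2)"

definition id2 :: "bool \<Rightarrow> bool \<Rightarrow> complex" where
  "id2 b1 b2 = (if b1 = b2 then 1 else 0)"

definition amp :: "real \<Rightarrow> bool \<Rightarrow> real" where
  "amp p b = (if b then sqrt p else sqrt (1 - p))"

definition rot :: "real \<Rightarrow> bool \<Rightarrow> bool \<Rightarrow> complex" where
  "rot p b1 b2 = complex_of_real (if b2 then (if b1 then sqrt (1 - p) else - sqrt p) else amp p b1)"

lemma unitary2_hadamard: "unitary2 hadamard"
proof -
  have s: "complex_of_real (1 / sqrt 2) * complex_of_real (1 / sqrt 2) = 1/2"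
    by (simp flip: of_real_mult)
  show ?thesis unfolding unitary2_def
    by (intro allI, case_tac b1; case_tac b2) (simp_all add: sum_bool hadamard_def s flip: of_real_mult)
qed

lemma unitary2_id2: "unitary2 id2"
  unfolding unitary2_def by (intro allI, case_tac b1; case_tac b2) (simp_all add: sum_bool id2_def)

lemma unitary2_rot:
  assumes "0 \<le> p" "p \<le> 1"
  shows "unitary2 (rot p)"
proof -
  have a: "sqrt p * sqrt p = p" "sqrt (1-p) * sqrt (1-p) = 1 - p" using assms by simp_all
  show ?thesis unfolding unitary2_def using assms
    by (intro allI, case_tac b1; case_tac b2)
      (simp_all add: sum_bool rot_def amp_def a flip: of_real_mult of_real_add of_real_minus)
qed

lemma unitary2_swap_rows: "unitary2 g \<Longrightarrow> unitary2 (\<lambda>b. g (\<not> b))"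
  unfolding unitary2_def by (simp add: sum_bool add.commute)

text \<open>Qubits 0..<n hold x, n..<2n hold y, 2n..<2n+k the index register t, 2n+k is Alice's answer
  qubit and 2n+k+1 the output qubit. Bob puts t into uniform superposition and sends it to Alice
  (k rounds); Alice rotates the answer qubit to amplitude sqrt (pa t x) and sends it to Bob; she
  returns t (k rounds); Bob rotates the output qubit to amplitude sqrt (pb t y), with the roles
  of 0 and 1 exchanged when the answer is 0, and sends it to Alice. So the output is 1 with
  probability the average over t of pa pb + (1 - pa) (1 - pb).\<close>

locale rotation_protocol =
  fixes n k :: nat and \<alpha> \<beta> :: "bool list \<Rightarrow> bool list \<Rightarrow> real"
  assumes \<alpha>_bound: "\<bar>\<alpha> t x\<bar> \<le> 1" and \<beta>_bound: "\<bar>\<beta> t y\<bar> \<le> 1"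
begin

definition pa :: "bool list \<Rightarrow> bool list \<Rightarrow> real" where "pa t x = (1 + \<alpha> t x) / 2"
definition pb :: "bool list \<Rightarrow> bool list \<Rightarrow> real" where "pb t y = (1 + \<beta> t y) / 2"

lemma pa_bounds: "0 \<le> pa t x" "pa t x \<le> 1"
  using \<alpha>_bound[of t x] by (simp_all add: pa_def abs_le_iff)

lemma pb_bounds: "0 \<le> pb t y" "pb t y \<le> 1"
  using \<beta>_bound[of t y] by (simp_all add: pb_def abs_le_iff)

definition nqubits :: nat where "nqubits = 2*n + k + 2"
definition t_reg :: "bool list \<Rightarrow> bool list" where "t_reg c = map (\<lambda>i. c!(2*n+i)) [0..<k]"
definition x_reg :: "bool list \<Rightarrow> bool list" where "x_reg c = take n c"
definition y_reg :: "bool list \<Rightarrow> bool list" where "y_reg c = take n (drop n c)"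

definition alice_rot :: "bool list \<Rightarrow> bool \<Rightarrow> bool \<Rightarrow> complex" where
  "alice_rot c = rot (pa (t_reg c) (x_reg c))"
definition bob_rot :: "bool list \<Rightarrow> bool \<Rightarrow> bool \<Rightarrow> complex" where
  "bob_rot c = (\<lambda>b1 b2. if c!(2*n+k) then rot (pb (t_reg c) (y_reg c)) b1 b2
     else rot (pb (t_reg c) (y_reg c)) (\<not>b1) b2)"

definition spread_round :: "nat \<Rightarrow> bool \<times> qop \<times> nat" where
  "spread_round j = (False, cgate nqubits (2*n+j) (\<lambda>c. hadamard), 2*n+j)"
definition alice_round :: "bool \<times> qop \<times> nat" where
  "alice_round = (True, cgate nqubits (2*n+k) alice_rot, 2*n+k)"
definition return_round :: "nat \<Rightarrow> bool \<times> qop \<times> nat" where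
  "return_round j = (True, cgate nqubits (2*n+j) (\<lambda>c. id2), 2*n+j)"
definition bob_round :: "bool \<times> qop \<times> nat" where
  "bob_round = (False, cgate nqubits (2*n+k+1) bob_rot, 2*n+k+1)"

definition alice0 :: "nat set" where "alice0 = {0..<n} \<union> {2*n+k}"

definition rprot :: qprot where
  "rprot = \<lparr>qnum = nqubits, qalice = alice0,
     qrounds = map spread_round [0..<k] @ [alice_round] @ map return_round [0..<k] @ [bob_round],
     qout = 2*n+k+1\<rparr>"

definition has_inputs :: "bool list \<Rightarrow> bool list \<Rightarrow> bool list \<Rightarrow> bool" where
  "has_inputs x y z \<longleftrightarrow> x_reg z = x \<and> y_reg z = y"

definition clear_from :: "nat \<Rightarrow> bool list \<Rightarrow> bool" where
  "clear_from j z \<longleftrightarrow> (\<forall>i. j \<le> i \<and> i < k + 2 \<longrightarrow> \<not> z ! (2*n + i))"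

definition phi_spread :: "bool list \<Rightarrow> bool list \<Rightarrow> nat \<Rightarrow> qst" where
  "phi_spread x y j z = (if has_inputs x y z \<and> clear_from j z then complex_of_real ((1/sqrt 2)^j) else 0)"

definition phi_alice :: "bool list \<Rightarrow> bool list \<Rightarrow> qst" where
  "phi_alice x y z = (if has_inputs x y z \<and> clear_from (k+1) z
     then complex_of_real ((1/sqrt 2)^k * amp (pa (t_reg z) (x_reg z)) (z!(2*n+k))) else 0)"

definition bob_amp :: "bool list \<Rightarrow> bool list \<Rightarrow> real" where
  "bob_amp y z = (if z!(2*n+k) then amp (pb (t_reg z) y) (z!(2*n+k+1)) else amp (pb (t_reg z) y) (\<not> z!(2*n+k+1)))"

definition phi_final :: "bool list \<Rightarrow> bool list \<Rightarrow> qst" where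
  "phi_final x y z = (if has_inputs x y z
     then complex_of_real ((1/sqrt 2)^k * amp (pa (t_reg z) (x_reg z)) (z!(2*n+k)) * bob_amp (y_reg z) z) else 0)"

lemma has_inputs_update: assumes "2*n \<le> p" shows "has_inputs x y (z[p := b]) = has_inputs x y z"
proof -
  have "take n (drop n (z[p := b])) = take n (drop n z)"
    by (rule nth_equalityI) (use assms in \<open>auto simp: nth_list_update\<close>)
  moreover have "take n (z[p := b]) = take n z" using assms by (simp add: take_update_cancel)
  ultimately show ?thesis by (simp add: has_inputs_def x_reg_def y_reg_def)
qed

lemma not_clear_from_update_True: "j < k + 2 \<Longrightarrow> 2*n + j < length z \<Longrightarrow> \<not> clear_from j (z[2*n + j := True])"
  unfolding clear_from_def by (auto intro!: exI[of _ j])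

lemma clear_from_update_False:
  assumes "2*n + j < length z"
  shows "clear_from j (z[2*n + j := False]) \<longleftrightarrow> clear_from (Suc j) z"
proof -
  have upd: "z[2*n + j := False] ! (2*n + i) = (i \<noteq> j \<and> z ! (2*n + i))" for i
    using assms by (auto simp: nth_list_update)
  show ?thesis unfolding clear_from_def
  proof (intro iffI allI impI)
    fix i assume A: "\<forall>i. j \<le> i \<and> i < k + 2 \<longrightarrow> \<not> z[2*n + j := False] ! (2*n + i)"
      and i: "Suc j \<le> i \<and> i < k + 2"
    then show "\<not> z ! (2*n + i)" using A[rule_format, of i] upd[of i] by simp
  next
    fix i assume "\<forall>i. Suc j \<le> i \<and> i < k + 2 \<longrightarrow> \<not> z ! (2*n + i)" "j \<le> i \<and> i < k + 2"
    then show "\<not> z[2*n + j := False] ! (2*n + i)" using upd[of i] by (cases "i = j") auto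
  qed
qed

lemma clear_from_end: "clear_from (k + 2) z"
  by (auto simp: clear_from_def)

lemma nth_control: "z \<in> qbasis nqubits \<Longrightarrow> i \<in> S \<Longrightarrow> i \<noteq> p \<Longrightarrow> i < nqubits \<Longrightarrow> ((restr S z)[p := False]) ! i = z ! i"
  by (simp add: qbasis_def nth_list_update)

lemma t_reg_control: assumes "z \<in> qbasis nqubits" "\<And>i. i < k \<Longrightarrow> 2*n+i \<in> S \<and> 2*n+i \<noteq> p"
  shows "t_reg ((restr S z)[p := False]) = t_reg z"
  unfolding t_reg_def
proof (rule map_cong[OF refl])
  fix i assume "i \<in> set [0..<k]"
  then have i: "i < k" by simp
  show "(restr S z)[p := False] ! (2*n+i) = z ! (2*n+i)"
    using assms(2)[OF i] i by (intro nth_control[OF assms(1)]) (auto simp: nqubits_def)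
qed

lemma x_reg_control: assumes "z \<in> qbasis nqubits" "\<And>i. i < n \<Longrightarrow> i \<in> S \<and> i \<noteq> p"
  shows "x_reg ((restr S z)[p := False]) = x_reg z"
proof -
  have lz: "length z = nqubits" using assms(1) by (simp add: qbasis_def)
  show ?thesis unfolding x_reg_def
  proof (rule nth_equalityI)
    show "length (take n ((restr S z)[p := False])) = length (take n z)" by simp
  next
    fix i assume "i < length (take n ((restr S z)[p := False]))"
    then have i: "i < n" "i < nqubits" using lz by auto
    have "(restr S z)[p := False] ! i = z ! i"
      using assms(2)[OF i(1)] i by (intro nth_control[OF assms(1)]) auto
    then show "take n ((restr S z)[p := False]) ! i = take n z ! i" using i by simp
  qed
qed

lemma y_reg_control: assumes "z \<in> qbasis nqubits" "\<And>i. n \<le> i \<Longrightarrow> i < 2*n \<Longrightarrow> i \<in> S \<and> i \<noteq> p"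
  shows "y_reg ((restr S z)[p := False]) = y_reg z"
proof -
  have lz: "length z = nqubits" using assms(1) by (simp add: qbasis_def)
  show ?thesis unfolding y_reg_def
  proof (rule nth_equalityI)
    show "length (take n (drop n ((restr S z)[p := False]))) = length (take n (drop n z))" by simp
  next
    fix i assume "i < length (take n (drop n ((restr S z)[p := False])))"
    then have i: "i < n" "n + i < nqubits" using lz by auto
    have "(restr S z)[p := False] ! (n+i) = z ! (n+i)"
      using assms(2)[of "n+i"] i by (intro nth_control[OF assms(1)]) auto
    then show "take n (drop n ((restr S z)[p := False])) ! i = take n (drop n z) ! i" using i lz by simp
  qed
qed

lemma x_reg_update: "n \<le> p \<Longrightarrow> x_reg (z[p := b]) = x_reg z"
  by (simp add: x_reg_def take_update_cancel)

lemma t_reg_update: "2*n+k \<le> p \<Longrightarrow> t_reg (z[p := b]) = t_reg z"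
  by (auto simp: t_reg_def nth_list_update)

lemma qinit_eq_phi_spread:
  assumes xy: "x \<in> inputs n" "y \<in> inputs n" and z: "z \<in> qbasis nqubits"
  shows "qinit nqubits x y z = phi_spread x y 0 z"
proof -
  have lx: "length x = n" and ly: "length y = n" using xy by (auto simp: inputs_def)
  have lz: "length z = nqubits" using z by (simp add: qbasis_def)
  let ?w = "x @ y @ replicate (k+2) False"
  have "z = ?w \<longleftrightarrow> has_inputs x y z \<and> (\<forall>i. i < k+2 \<longrightarrow> \<not> z!(2*n+i))"
  proof
    assume "z = ?w"
    moreover have "\<forall>i. i < k+2 \<longrightarrow> \<not> ?w!(2*n+i)"
    proof (intro allI impI)
      fix i assume "i < k+2"
      then have "?w!(2*n+i) = replicate (k+2) False ! i" using lx ly by (simp add: nth_append mult_2)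
      then show "\<not> ?w!(2*n+i)" using \<open>i < k+2\<close> by (simp del: replicate_Suc)
    qed
    ultimately show "has_inputs x y z \<and> (\<forall>i. i < k+2 \<longrightarrow> \<not> z!(2*n+i))"
      using lx ly by (simp add: has_inputs_def x_reg_def y_reg_def)
  next
    assume a: "has_inputs x y z \<and> (\<forall>i. i < k+2 \<longrightarrow> \<not> z!(2*n+i))"
    have d: "drop (2*n) z = replicate (k+2) False"
    proof (rule nth_equalityI)
      show "length (drop (2*n) z) = length (replicate (k+2) False)" using lz by (simp add: nqubits_def)
    next
      fix i assume "i < length (drop (2*n) z)"
      then have i: "i < k+2" using lz by (simp add: nqubits_def)
      then have "drop (2*n) z ! i = z!(2*n+i)" using lz by (simp add: nqubits_def)
      then show "drop (2*n) z ! i = replicate (k+2) False ! i" using a i by (simp del: replicate_Suc)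
    qed
    have "z = take n z @ take n (drop n z) @ drop n (drop n z)"
      by (metis append_take_drop_id)
    also have "drop n (drop n z) = drop (2*n) z" by (simp add: mult_2)
    finally show "z = ?w" using a d by (simp add: has_inputs_def x_reg_def y_reg_def)
  qed
  moreover have "nqubits - length x - length y = k+2" using lx ly by (simp add: nqubits_def)
  ultimately show ?thesis by (simp add: qinit_def phi_spread_def clear_from_def)
qed

lemma hadamard_step:
  assumes j: "j < k" and z: "z \<in> qbasis nqubits"
  shows "(\<Sum>b\<in>UNIV. hadamard (z!(2*n+j)) b * phi_spread x y j (z[2*n+j := b])) = phi_spread x y (Suc j) z"
proof -
  have p: "2*n + j < length z" using z j by (simp add: qbasis_def nqubits_def)
  show ?thesis
    using not_clear_from_update_True[OF _ p] clear_from_update_False[OF p] j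
    by (simp add: sum_bool phi_spread_def hadamard_def has_inputs_update flip: of_real_mult)
qed

lemma spread_rounds:
  assumes xy: "x \<in> inputs n" "y \<in> inputs n"
  shows "j \<le> k \<Longrightarrow> qvalid nqubits (map spread_round [0..<j]) alice0 \<and>
     alice_after nqubits (map spread_round [0..<j]) alice0 = alice0 \<union> {2*n..<2*n+j} \<and>
     (\<forall>z\<in>qbasis nqubits. qfinal nqubits (map spread_round [0..<j]) alice0 (qinit nqubits x y) z = phi_spread x y j z)"
proof (induction j)
  case 0
  then show ?case using qinit_eq_phi_spread[OF xy] by simp
next
  case (Suc j)
  then have j: "j < k" by simp
  note IH = Suc.IH[OF Suc_leD[OF Suc.prems]]
  let ?OA = "alice0 \<union> {2*n..<2*n+j}"
  let ?S = "{0..<nqubits} - ?OA"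
  let ?p = "2*n+j"
  have p: "?p \<in> ?S" "?p < nqubits" using j by (auto simp: alice0_def nqubits_def)
  have split: "map spread_round [0..<Suc j] = map spread_round [0..<j] @ [spread_round j]" by simp
  have v: "qvalid nqubits [spread_round j] ?OA"
    unfolding spread_round_def qvalid_single using local_unitary_cgate[OF p unitary2_hadamard] p by simp
  have o: "alice_after nqubits [spread_round j] ?OA = alice0 \<union> {2*n..<2*n+Suc j}" by (auto simp: spread_round_def)
  have s: "qfinal nqubits (map spread_round [0..<Suc j]) alice0 (qinit nqubits x y) z = phi_spread x y (Suc j) z"
    if z: "z \<in> qbasis nqubits" for z
  proof -
    have "qfinal nqubits (map spread_round [0..<Suc j]) alice0 (qinit nqubits x y) z =
        apply_op nqubits ?S (cgate nqubits ?p (\<lambda>c. hadamard)) (qfinal nqubits (map spread_round [0..<j]) alice0 (qinit nqubits x y)) z"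
    proof -
      have o1: "alice_after nqubits (map spread_round [0..<j]) alice0 = ?OA" using IH by blast
      show ?thesis unfolding split qfinal_append o1 by (simp add: spread_round_def Let_def)
    qed
    also have "\<dots> = (\<Sum>b\<in>UNIV. hadamard (z!?p) b * qfinal nqubits (map spread_round [0..<j]) alice0 (qinit nqubits x y) (z[?p := b]))"
      by (rule apply_op_cgate[OF p z])
    also have "\<dots> = (\<Sum>b\<in>UNIV. hadamard (z!?p) b * phi_spread x y j (z[?p := b]))"
      using IH z by (intro sum.cong refl) (auto simp: qbasis_def)
    also have "\<dots> = phi_spread x y (Suc j) z" by (rule hadamard_step[OF j z])
    finally show ?thesis .
  qed
  show ?case using IH v o s unfolding split qvalid_append alice_after_append by simp
qed

definition alice1 :: "nat set" where "alice1 = alice0 \<union> {2*n..<2*n+k}"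
definition alice2 :: "nat set" where "alice2 = {0..<n} \<union> {2*n..<2*n+k}"

lemma unitary2_alice_rot: "unitary2 (alice_rot c)"
  unfolding alice_rot_def by (rule unitary2_rot[OF pa_bounds])

lemma unitary2_bob_rot: "unitary2 (bob_rot c)"
  unfolding bob_rot_def using unitary2_rot[OF pb_bounds] unitary2_swap_rows[OF unitary2_rot[OF pb_bounds]]
  by (cases "c ! (2*n+k)") simp_all

lemma alice_round_state:
  assumes z: "z \<in> qbasis nqubits" and psi: "\<forall>w\<in>qbasis nqubits. \<psi> w = phi_spread x y k w"
  shows "apply_op nqubits alice1 (cgate nqubits (2*n+k) alice_rot) \<psi> z = phi_alice x y z"
proof -
  let ?p = "2*n+k" and ?c = "(restr alice1 z)[2*n+k := False]"
  have p: "?p \<in> alice1" "?p < nqubits" and pz: "2*n + k < length z"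
    using z by (auto simp: alice1_def alice0_def nqubits_def qbasis_def)
  have "t_reg ?c = t_reg z" by (rule t_reg_control[OF z]) (auto simp: alice1_def)
  moreover have "x_reg ?c = x_reg z" by (rule x_reg_control[OF z]) (auto simp: alice1_def alice0_def)
  moreover have "apply_op nqubits alice1 (cgate nqubits ?p alice_rot) \<psi> z =
      (\<Sum>b\<in>UNIV. alice_rot ?c (z ! ?p) b * phi_spread x y k (z[?p := b]))"
    unfolding apply_op_cgate[OF p z] using psi z by (intro sum.cong refl) (auto simp: qbasis_def)
  ultimately show ?thesis
    using not_clear_from_update_True[OF _ pz] clear_from_update_False[OF pz]
    by (simp add: sum_bool phi_spread_def phi_alice_def alice_rot_def rot_def has_inputs_update mult.commute)
qed

lemma return_rounds:
  shows "j \<le> k \<Longrightarrow> qvalid nqubits (map return_round [0..<j]) alice2 \<and>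
     alice_after nqubits (map return_round [0..<j]) alice2 = {0..<n} \<union> {2*n+j..<2*n+k} \<and>
     (\<forall>z\<in>qbasis nqubits. qfinal nqubits (map return_round [0..<j]) alice2 \<psi> z = \<psi> z)"
proof (induction j)
  case 0
  then show ?case by (simp add: alice2_def)
next
  case (Suc j)
  then have j: "j < k" by simp
  note IH = Suc.IH[OF Suc_leD[OF Suc.prems]]
  let ?OA = "{0..<n} \<union> {2*n+j..<2*n+k}"
  let ?p = "2*n+j"
  have p: "?p \<in> ?OA" "?p < nqubits" using j by (auto simp: nqubits_def)
  have split: "map return_round [0..<Suc j] = map return_round [0..<j] @ [return_round j]" by simp
  have v: "qvalid nqubits [return_round j] ?OA"
    unfolding return_round_def qvalid_single using local_unitary_cgate[OF p unitary2_id2] p by simp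
  have o: "alice_after nqubits [return_round j] ?OA = {0..<n} \<union> {2*n+Suc j..<2*n+k}" by (auto simp: return_round_def)
  have s: "qfinal nqubits (map return_round [0..<Suc j]) alice2 \<psi> z = \<psi> z" if z: "z \<in> qbasis nqubits" for z
  proof -
    have o1: "alice_after nqubits (map return_round [0..<j]) alice2 = ?OA" using IH by blast
    have "qfinal nqubits (map return_round [0..<Suc j]) alice2 \<psi> z =
        apply_op nqubits ?OA (cgate nqubits ?p (\<lambda>c. id2)) (qfinal nqubits (map return_round [0..<j]) alice2 \<psi>) z"
      unfolding split qfinal_append o1 by (simp add: return_round_def Let_def)
    also have "\<dots> = (\<Sum>b\<in>UNIV. id2 (z!?p) b * qfinal nqubits (map return_round [0..<j]) alice2 \<psi> (z[?p := b]))"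
      by (rule apply_op_cgate[OF p z])
    also have "\<dots> = (\<Sum>b\<in>UNIV. id2 (z!?p) b * \<psi> (z[?p := b]))"
      using IH z by (intro sum.cong refl) (auto simp: qbasis_def)
    also have "\<dots> = \<psi> z"
    proof (cases "z!?p")
      case True
      then have "z[?p := True] = z" by (metis list_update_id)
      then show ?thesis using True by (simp add: sum_bool id2_def)
    next
      case False
      then have "z[?p := False] = z" by (metis list_update_id)
      then show ?thesis using False by (simp add: sum_bool id2_def)
    qed
    finally show ?thesis .
  qed
  show ?case using IH v o s unfolding split qvalid_append alice_after_append by simp
qed

lemma bob_round_state:
  assumes z: "z \<in> qbasis nqubits" and psi: "\<forall>w\<in>qbasis nqubits. \<psi> w = phi_alice x y w"
  shows "apply_op nqubits ({0..<nqubits} - {0..<n}) (cgate nqubits (2*n+k+1) bob_rot) \<psi> z = phi_final x y z"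
proof -
  let ?S = "{0..<nqubits} - {0..<n}" and ?p = "2*n+k+1" and ?c = "(restr ({0..<nqubits} - {0..<n}) z)[2*n+k+1 := False]"
  have p: "?p \<in> ?S" "?p < nqubits" and pz: "2*n + (k+1) < length z"
    using z by (auto simp: nqubits_def qbasis_def)
  have "t_reg ?c = t_reg z" by (rule t_reg_control[OF z]) (auto simp: nqubits_def)
  moreover have "y_reg ?c = y_reg z" by (rule y_reg_control[OF z]) (auto simp: nqubits_def)
  moreover have "?c ! (2*n+k) = z ! (2*n+k)" by (rule nth_control[OF z]) (auto simp: nqubits_def)
  moreover have "apply_op nqubits ?S (cgate nqubits ?p bob_rot) \<psi> z =
      (\<Sum>b\<in>UNIV. bob_rot ?c (z ! ?p) b * phi_alice x y (z[?p := b]))"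
    unfolding apply_op_cgate[OF p z] using psi z by (intro sum.cong refl) (auto simp: qbasis_def)
  ultimately show ?thesis
    using not_clear_from_update_True[OF _ pz] clear_from_update_False[OF pz] clear_from_end
    by (simp add: sum_bool phi_alice_def phi_final_def bob_rot_def rot_def bob_amp_def has_inputs_update
        t_reg_update x_reg_update mult.commute)
qed

lemma rprot_final:
  assumes xy: "x \<in> inputs n" "y \<in> inputs n"
  shows "qvalid nqubits (qrounds rprot) alice0 \<and>
    (\<forall>z\<in>qbasis nqubits. qfinal nqubits (qrounds rprot) alice0 (qinit nqubits x y) z = phi_final x y z)"
proof -
  let ?R1 = "map spread_round [0..<k]" and ?R3 = "map return_round [0..<k]"
  have P1: "qvalid nqubits ?R1 alice0" "alice_after nqubits ?R1 alice0 = alice1"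
    "\<forall>z\<in>qbasis nqubits. qfinal nqubits ?R1 alice0 (qinit nqubits x y) z = phi_spread x y k z"
    using spread_rounds[OF xy, of k] by (auto simp: alice1_def)
  define \<psi>1 where "\<psi>1 = qfinal nqubits ?R1 alice0 (qinit nqubits x y)"
  have pA: "2*n+k \<in> alice1" "2*n+k < nqubits" by (auto simp: alice1_def alice0_def nqubits_def)
  have v2: "qvalid nqubits [alice_round] alice1"
    unfolding alice_round_def qvalid_single using local_unitary_cgate[OF pA unitary2_alice_rot] pA by simp
  have o2: "alice_after nqubits [alice_round] alice1 = alice2"
    by (auto simp: alice_round_def alice1_def alice2_def alice0_def)
  define \<psi>2 where "\<psi>2 = qfinal nqubits [alice_round] alice1 \<psi>1"
  have s2: "\<forall>z\<in>qbasis nqubits. \<psi>2 z = phi_alice x y z"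
  proof
    fix z assume z: "z \<in> qbasis nqubits"
    have "\<psi>2 = apply_op nqubits alice1 (cgate nqubits (2*n+k) alice_rot) \<psi>1" by (simp add: \<psi>2_def alice_round_def)
    then show "\<psi>2 z = phi_alice x y z" using alice_round_state[OF z] P1(3) by (simp add: \<psi>1_def)
  qed
  have P3: "qvalid nqubits ?R3 alice2" "alice_after nqubits ?R3 alice2 = {0..<n}"
    "\<forall>z\<in>qbasis nqubits. qfinal nqubits ?R3 alice2 \<psi>2 z = \<psi>2 z"
    using return_rounds[of k \<psi>2] by auto
  define \<psi>3 where "\<psi>3 = qfinal nqubits ?R3 alice2 \<psi>2"
  have s3: "\<forall>z\<in>qbasis nqubits. \<psi>3 z = phi_alice x y z" using P3(3) s2 by (simp add: \<psi>3_def)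
  have pB: "2*n+k+1 \<in> {0..<nqubits} - {0..<n}" "2*n+k+1 < nqubits" by (auto simp: nqubits_def)
  have v4: "qvalid nqubits [bob_round] {0..<n}"
    unfolding bob_round_def qvalid_single using local_unitary_cgate[OF pB unitary2_bob_rot] pB by simp
  have s4: "\<forall>z\<in>qbasis nqubits. qfinal nqubits [bob_round] {0..<n} \<psi>3 z = phi_final x y z"
  proof
    fix z assume z: "z \<in> qbasis nqubits"
    have "qfinal nqubits [bob_round] {0..<n} \<psi>3 = apply_op nqubits ({0..<nqubits} - {0..<n}) (cgate nqubits (2*n+k+1) bob_rot) \<psi>3"
      by (simp add: bob_round_def)
    then show "qfinal nqubits [bob_round] {0..<n} \<psi>3 z = phi_final x y z" using bob_round_state[OF z s3] by simp
  qed
  have R: "qrounds rprot = ?R1 @ [alice_round] @ ?R3 @ [bob_round]" by (simp add: rprot_def)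
  have "qvalid nqubits (qrounds rprot) alice0"
    unfolding R qvalid_append using P1 v2 o2 P3 v4 by (simp add: alice_after_append)
  moreover have "qfinal nqubits (qrounds rprot) alice0 (qinit nqubits x y) = qfinal nqubits [bob_round] {0..<n} \<psi>3"
    unfolding R qfinal_append using P1(2) o2 P3(2) by (simp add: alice_after_append \<psi>1_def \<psi>2_def \<psi>3_def)
  ultimately show ?thesis using s4 by simp
qed

lemma sum_qbasis_has_inputs:
  assumes xy: "x \<in> inputs n" "y \<in> inputs n" and F: "\<forall>z\<in>qbasis nqubits. \<not> has_inputs x y z \<longrightarrow> F z = 0"
  shows "(\<Sum>z\<in>qbasis nqubits. F z) = (\<Sum>s\<in>inputs (k+2). F (x @ y @ s))"
proof -
  have lx: "length x = n" and ly: "length y = n" using xy by (auto simp: inputs_def)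
  let ?g = "\<lambda>s. x @ y @ s"
  have inj: "inj_on ?g (inputs (k+2))" by (auto simp: inj_on_def)
  have img: "?g ` inputs (k+2) = {z \<in> qbasis nqubits. has_inputs x y z}"
  proof
    show "?g ` inputs (k+2) \<subseteq> {z \<in> qbasis nqubits. has_inputs x y z}"
      using lx ly by (auto simp: inputs_def qbasis_def nqubits_def has_inputs_def x_reg_def y_reg_def)
  next
    show "{z \<in> qbasis nqubits. has_inputs x y z} \<subseteq> ?g ` inputs (k+2)"
    proof
      fix z assume z: "z \<in> {z \<in> qbasis nqubits. has_inputs x y z}"
      then have lz: "length z = nqubits" and b: "take n z = x" "take n (drop n z) = y"
        by (auto simp: qbasis_def has_inputs_def x_reg_def y_reg_def)
      have "z = take n z @ take n (drop n z) @ drop n (drop n z)" by (metis append_take_drop_id)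
      then have "z = ?g (drop n (drop n z))" using b by simp
      moreover have "drop n (drop n z) \<in> inputs (k+2)" using lz by (simp add: inputs_def nqubits_def)
      ultimately show "z \<in> ?g ` inputs (k+2)" by blast
    qed
  qed
  have "(\<Sum>z\<in>qbasis nqubits. F z) = (\<Sum>z\<in>{z \<in> qbasis nqubits. has_inputs x y z}. F z)"
    using F by (intro sum.mono_neutral_right[OF finite_qbasis]) auto
  also have "\<dots> = (\<Sum>s\<in>inputs (k+2). F (x @ y @ s))"
    unfolding img[symmetric] by (subst sum.reindex[OF inj]) simp
  finally show ?thesis .
qed

lemma sum_inputs_2: "(\<Sum>w\<in>inputs 2. G w) = G [True, True] + G [True, False] + G [False, True] + G [False, False]"
proof -
  have "(\<Sum>w\<in>inputs (Suc (Suc 0)). G w) = G [True, True] + G [True, False] + G [False, True] + G [False, False]"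
    unfolding sum_inputs_Suc by (simp add: inputs_def algebra_simps)
  then show ?thesis by (simp add: numeral_2_eq_2)
qed

lemma norm_phi_final:
  assumes "x \<in> inputs n" "y \<in> inputs n" "t \<in> inputs k"
  shows "(cmod (phi_final x y (x @ y @ t @ [a1, b1])))\<^sup>2 =
    (if a1 then pa t x else 1 - pa t x) * (if a1 = b1 then pb t y else 1 - pb t y) / 2^k"
proof -
  let ?z = "x @ y @ t @ [a1, b1]"
  have z: "?z ! (2*n+k) = a1" "?z ! (2*n+k+1) = b1" "has_inputs x y ?z" "t_reg ?z = t" "x_reg ?z = x" "y_reg ?z = y"
    using assms by (auto simp: inputs_def nth_append has_inputs_def x_reg_def y_reg_def t_reg_def intro!: nth_equalityI)
  have sq: "((1 / sqrt 2) ^ k)\<^sup>2 = (1 / 2^k :: real)"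
    by (simp add: power_mult_distrib[symmetric] power_divide power2_eq_square flip: power_mult)
  have amp_sq: "(amp p b)\<^sup>2 = (if b then p else 1 - p)" if "0 \<le> p" "p \<le> 1" for p b
    using that by (simp add: amp_def)
  have "(cmod (phi_final x y ?z))\<^sup>2 = ((1/sqrt 2)^k)\<^sup>2 * (amp (pa t x) a1)\<^sup>2 * (bob_amp y ?z)\<^sup>2"
    unfolding phi_final_def if_P[OF z(3)] norm_of_real power2_abs
    by (simp only: power_mult_distrib z(1) z(4) z(5) z(6))
  then show ?thesis
    unfolding sq bob_amp_def z using amp_sq[OF pa_bounds] amp_sq[OF pb_bounds] by simp
qed

lemma qerr_rprot:
  assumes xy: "x \<in> inputs n" "y \<in> inputs n"
  shows "qerr rprot f x y = 1/2 - bsign (f x y) * (\<Sum>t\<in>inputs k. \<alpha> t x * \<beta> t y) / 2^(k+1)"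
proof -
  have fin: "\<forall>z\<in>qbasis nqubits. qfinal nqubits (qrounds rprot) alice0 (qinit nqubits x y) z = phi_final x y z"
    using rprot_final[OF xy] by blast
  define F where "F z = (if z!(2*n+k+1) \<noteq> f x y then (cmod (phi_final x y z))\<^sup>2 else 0)" for z
  have "qerr rprot f x y = (\<Sum>z\<in>{z \<in> qbasis nqubits. z!(2*n+k+1) \<noteq> f x y}. (cmod (phi_final x y z))\<^sup>2)"
    unfolding qerr_def Let_def using fin by (simp add: rprot_def)
  also have "\<dots> = (\<Sum>z\<in>qbasis nqubits. F z)"
    unfolding F_def by (simp add: sum.inter_filter finite_qbasis)
  also have "\<dots> = (\<Sum>s\<in>inputs (k+2). F (x @ y @ s))"
    by (rule sum_qbasis_has_inputs[OF xy]) (auto simp: F_def phi_final_def)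
  also have "\<dots> = (\<Sum>t\<in>inputs k. \<Sum>w\<in>inputs 2. F (x @ y @ t @ w))"
    by (rule sum_inputs_add)
  also have "\<dots> = (\<Sum>t\<in>inputs k. (1 + - bsign (f x y) * (\<alpha> t x * \<beta> t y)) / 2^(k+1))"
  proof (intro sum.cong refl)
    fix t assume t: "t \<in> inputs k"
    have "F (x @ y @ t @ [a1, b1]) = (if b1 \<noteq> f x y then
        (if a1 then pa t x else 1 - pa t x) * (if a1 = b1 then pb t y else 1 - pb t y) / 2^k else 0)" for a1 b1
      using xy t by (simp add: F_def norm_phi_final length_append inputs_def nth_append)
    then show "(\<Sum>w\<in>inputs 2. F (x @ y @ t @ w)) = (1 + - bsign (f x y) * (\<alpha> t x * \<beta> t y)) / 2^(k+1)"
      unfolding sum_inputs_2 by (cases "f x y") (simp_all add: bsign_def pa_def pb_def field_simps)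
  qed
  finally show ?thesis unfolding sum_inputs_affine by simp
qed

end

lemma qprot_of_sign_rep:
  assumes "sign_rep n f k e"
  shows "\<exists>P. q_wue P n f \<and> length (qrounds P) = 2 * k + 2 \<and> e / 2 \<le> qdelta P n f"
proof -
  obtain a b where e: "0 < e" and a: "\<And>t x. \<bar>a t x\<bar> \<le> 1" and b: "\<And>t y. \<bar>b t y\<bar> \<le> 1"
    and margin: "\<And>x y. x \<in> inputs n \<Longrightarrow> y \<in> inputs n \<Longrightarrow> e * 2^k \<le> bsign (f x y) * (\<Sum>t\<in>inputs k. a t x * b t y)"
    using assms by (rule sign_repE) (rule that)
  interpret rotation_protocol n k a b
    using a b by unfold_locales
  have "qerr rprot f x y \<le> 1/2 - e/2" if "x \<in> inputs n" "y \<in> inputs n" for x y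
  proof -
    have "e / 2 \<le> bsign (f x y) * (\<Sum>t\<in>inputs k. a t x * b t y) / 2^(k+1)"
      using margin[OF that] by (simp add: field_simps)
    then show ?thesis using qerr_rprot[OF that, of f] by simp
  qed
  then have "e / 2 \<le> qdelta rprot n f" by (simp add: qdelta_ge_iff)
  moreover have "qwf rprot n"
    using rprot_final[of "replicate n False" "replicate n False"]
    by (auto simp: qwf_def rprot_def nqubits_def alice0_def inputs_def)
  ultimately show ?thesis using e by (intro exI[of _ rprot]) (simp add: q_wue_def rprot_def)
qed

lemma PC_le_QC: "PC n f \<le> 8 * QC n f"
  unfolding PC_def QC_def
proof (rule Inf_le_scaled_Inf)
  show "{qcost Q n f |Q. q_wue Q n f} \<noteq> {}"
    using qprot_of_sign_rep[OF sign_rep_trivial] by blast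
  show "bdd_below {ccost P n f |P. c_wue P n f}"
    using ccost_nonneg by (auto simp: bdd_below_def)
  fix c assume "c \<in> {qcost Q n f |Q. q_wue Q n f}"
  then obtain Q where Q: "q_wue Q n f" "c = qcost Q n f" by blast
  define r d where "r = length (qrounds Q)" and "d = qdelta Q n f"
  have d: "0 < d" "\<lfloor>log 2 d\<rfloor> \<le> -1"
    using Q(1) floor_log2_le_neg1 qdelta_le_half by (auto simp: q_wue_def d_def)
  obtain P where P: "c_wue P n f" "cdepth (ctr P) = 2 * r + 3" "d / 4^r / 2 \<le> cdelta P n f"
    using cprot_of_sign_rep[OF sign_rep_of_qprot[OF Q(1)]] by (auto simp: r_def d_def)
  have "d / 4^r / 2 = d / 2^(2 * r + 1)" by (simp add: power_mult)
  then have "\<lfloor>log 2 d\<rfloor> - int (2 * r + 1) \<le> \<lfloor>log 2 (cdelta P n f)\<rfloor>"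
    using P(3) d(1) floor_log2_ge_of_le_divide by metis
  then have "ccost P n f \<le> 8 * c"
    using d(2) by (simp add: ccost_def qcost_def P(2) Q(2) r_def d_def)
  then show "\<exists>p\<in>{ccost P n f |P. c_wue P n f}. p \<le> 8 * c" using P(1) by blast
qed (simp)

lemma QC_le_PC: "QC n f \<le> 8 * PC n f"
  unfolding PC_def QC_def
proof (rule Inf_le_scaled_Inf)
  show "{ccost P n f |P. c_wue P n f} \<noteq> {}"
    using cprot_of_sign_rep[OF sign_rep_trivial] by blast
  show "bdd_below {qcost Q n f |Q. q_wue Q n f}"
    using qcost_nonneg by (auto simp: bdd_below_def)
  fix c assume "c \<in> {ccost P n f |P. c_wue P n f}"
  then obtain P where P: "c_wue P n f" "c = ccost P n f" by blast
  define r d where "r = cdepth (ctr P)" and "d = cdelta P n f"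
  have d: "0 < d" "\<lfloor>log 2 d\<rfloor> \<le> -1"
    using P(1) floor_log2_le_neg1 cdelta_le_half by (auto simp: c_wue_def d_def)
  obtain Q where Q: "q_wue Q n f" "length (qrounds Q) = 2 * r + 4" "d / 2^(r + 1) / 2 \<le> qdelta Q n f"
    using qprot_of_sign_rep[OF sign_rep_of_cprot[OF P(1)]] by (auto simp: r_def d_def)
  have "d / 2^(r + 1) / 2 = d / 2^(r + 2)" by simp
  then have "\<lfloor>log 2 d\<rfloor> - int (r + 2) \<le> \<lfloor>log 2 (qdelta Q n f)\<rfloor>"
    using Q(3) d(1) floor_log2_ge_of_le_divide by metis
  then have "qcost Q n f \<le> 8 * c"
    using d(2) by (simp add: ccost_def qcost_def Q(2) P(2) r_def d_def)
  then show "\<exists>q\<in>{qcost Q n f |Q. q_wue Q n f}. q \<le> 8 * c" using Q(1) by blast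
qed (simp)

theorem theorem8p4:
  shows "\<exists>c1 c2 :: real. c1 > 0 \<and> c2 > 0 \<and>
    (\<forall>(n::nat) (f :: bool list \<Rightarrow> bool list \<Rightarrow> bool).
       PC n f \<le> c1 * QC n f \<and> QC n f \<le> c2 * PC n f)"
  using PC_le_QC QC_le_PC by (intro exI[of _ 8]) auto

end
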